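(* Let $\preceq$ be the reverse lexicographic order on $k[E_4]$ with $e_1\succ e_2\succ e_3\succ e_4\succ f_{12}\succ f_{13}\succ f_{23}\succ f_{14}\succ f_{24}\succ f_{34}$, and let $M_4=(f_{23}f_{14},\ e_1f_{14},\ e_1f_{13},\ e_2f_{12},\ e_1f_{12})$. Then: (1) the generators of $M_4$ do not involve $e_4$; (2) $M_4\subseteq\mathrm{in}_{\preceq}(Q_4)$; (3) the multigraded Hilbert series of $k[E_4]/M_4$ is $W_4$-invariant; (4) for every $m\in\mathbb{N}$ and all $a_1,\dots,a_4$ sufficiently large, $\dim_k\bigl(k[E_4]/M_4\bigr)_{m\ell+\sum_ia_ie_i}=\binom{m+2}{2}$.
   Context: $X_4$ is the blow up of $\mathbb{P}^2$ at four points in general position (no three collinear). $\mathrm{Pic}(X_4)$ has basis $\ell,e_1,\dots,e_4$ with $\ell^2=1$, $\ell\cdot e_j=0$, $e_i\cdot e_j=-\delta_{ij}$, $K=-3\ell+\sum e_i$. The exceptional curve classes (classes $E$ with $K\cdot E=E^2=-1$) are the ten classes $e_i$ and $\ell-e_i-e_j$ ($i<j$); $k[E_4]$ is the polynomial ring in variables $e_i$ and $f_{ij}$, $\mathrm{Pic}(X_4)$-graded by $\deg e_i=e_i$, $\deg f_{ij}=\ell-e_i-e_j$. $\mathrm{Cox}(X_4)=\bigoplus_DH^0(\mathcal{O}(D))$ is generated by sections of the $\mathcal{O}(E)$; choosing nonzero sections $s_E$, $C_4$ is the kernel of $k[E_4]\to\mathrm{Cox}(X_4)$, variable of $E\mapsto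 s_E$. A conic class is $D$ with $-K\cdot D=2$, $D^2=0$; $Q_4\subseteq C_4$ is the ideal generated by the pieces $(C_4)_D$, $D$ a conic class. $W_4\subset\mathrm{Aut}(\mathrm{Pic}(X_4))$ is generated by the permutations of $e_1,\dots,e_4$ (fixing $\ell$) and $\sigma$: $\sigma(\ell)=2\ell-e_1-e_2-e_3$, $\sigma(e_1)=\ell-e_2-e_3$, $\sigma(e_2)=\ell-e_1-e_3$, $\sigma(e_3)=\ell-e_1-e_2$, $\sigma(e_4)=e_4$. The multigraded Hilbert series of a graded module $N$ is $\sum_D\dim_k(N_D)t^D$; $g\in W_4$ acts by $g(\sum a_Dt^D)=\sum a_Dt^{g(D)}$, and invariance means $g$ fixes the series for all $g\in W_4$. *)

theory Defs
  imports Main HOL.Vector_Spaces "HOL-Library.Poly_Mapping" "HOL-Library.Product_Plus"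
begin

text \<open>A class D = m l + c1 e1 + c2 e2 + c3 e3 + c4 e4 is the tuple (m, c1, c2, c3, c4).\<close>
type_synonym pic = "int \<times> int \<times> int \<times> int \<times> int"

fun coef :: "pic \<Rightarrow> nat \<Rightarrow> int" where
  "coef (m, a1, a2, a3, a4) i =
     (if i = 0 then m else if i = 1 then a1 else if i = 2 then a2
      else if i = 3 then a3 else if i = 4 then a4 else 0)"

definition mkpic :: "(nat \<Rightarrow> int) \<Rightarrow> pic" where
  "mkpic v = (v 0, v 1, v 2, v 3, v 4)"

fun pscale :: "nat \<Rightarrow> pic \<Rightarrow> pic" where
  "pscale n (m, a1, a2, a3, a4) = (int n * m, int n * a1, int n * a2, int n * a3, int n * a4)"

definition inter :: "pic \<Rightarrow> pic \<Rightarrow> int" where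
  "inter D D' = coef D 0 * coef D' 0 - (\<Sum>i\<in>{1..4::nat}. coef D i * coef D' i)"

definition canK :: pic where "canK = (-3, 1, 1, 1, 1)"

definition conic_class :: "pic \<Rightarrow> bool" where
  "conic_class D \<longleftrightarrow> - inter canK D = 2 \<and> inter D D = 0"

fun sigmaW :: "pic \<Rightarrow> pic" where
  "sigmaW (m, a1, a2, a3, a4) =
     (2*m + a1 + a2 + a3, -m - a2 - a3, -m - a1 - a3, -m - a1 - a2, a4)"

text \<open>The permutation pi of {1..4} acts by e_i |-> e_(pi i); as a map of coordinates
  the coefficient of e_j becomes that of e_(pi^-1 j).  The set of these maps over all
  permutations is the same as the set of maps D |-> mkpic (coef D o pi).\<close>
definition perm_maps :: "(pic \<Rightarrow> pic) set" where
  "perm_maps = {(\<lambda>D. mkpic (\<lambda>i. coef D (\<pi> i))) | \<pi>.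
        bij_betw \<pi> {1..4::nat} {1..4} \<and> (\<forall>i. i \<notin> {1..4} \<longrightarrow> \<pi> i = i)}"

inductive_set W4 :: "(pic \<Rightarrow> pic) set" where
  W4_id: "id \<in> W4"
| W4_step: "g \<in> W4 \<Longrightarrow> h \<in> insert sigmaW perm_maps \<Longrightarrow> h \<circ> g \<in> W4"

datatype ev = E1 | E2 | E3 | E4 | F12 | F13 | F23 | F14 | F24 | F34

definition all_vars :: "ev set" where
  "all_vars = {E1, E2, E3, E4, F12, F13, F23, F14, F24, F34}"

text \<open>Position in the variable order e1 > e2 > e3 > e4 > f12 > f13 > f23 > f14 > f24 > f34
  (smaller index = larger variable).\<close>
fun vidx :: "ev \<Rightarrow> nat" where
  "vidx E1 = 0" | "vidx E2 = 1" | "vidx E3 = 2" | "vidx E4 = 3" | "vidx F12 = 4"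
| "vidx F13 = 5" | "vidx F23 = 6" | "vidx F14 = 7" | "vidx F24 = 8" | "vidx F34 = 9"

fun vdeg :: "ev \<Rightarrow> pic" where
  "vdeg E1 = (0, 1, 0, 0, 0)" | "vdeg E2 = (0, 0, 1, 0, 0)"
| "vdeg E3 = (0, 0, 0, 1, 0)" | "vdeg E4 = (0, 0, 0, 0, 1)"
| "vdeg F12 = (1, -1, -1, 0, 0)" | "vdeg F13 = (1, -1, 0, -1, 0)"
| "vdeg F23 = (1, 0, -1, -1, 0)" | "vdeg F14 = (1, -1, 0, 0, -1)"
| "vdeg F24 = (1, 0, -1, 0, -1)" | "vdeg F34 = (1, 0, 0, -1, -1)"

type_synonym mon = "ev \<Rightarrow>\<^sub>0 nat"
type_synonym 'k kE = "mon \<Rightarrow>\<^sub>0 'k"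

definition mdeg :: "mon \<Rightarrow> pic" where
  "mdeg \<alpha> = (\<Sum>v\<in>all_vars. pscale (Poly_Mapping.lookup \<alpha> v) (vdeg v))"

definition piece :: "pic \<Rightarrow> 'k::field kE set" where
  "piece D = {P. \<forall>\<alpha>\<in>Poly_Mapping.keys P. mdeg \<alpha> = D}"

definition ideal_gen :: "'a::comm_ring_1 set \<Rightarrow> 'a set" where
  "ideal_gen S = module.span (*) S"

definition kscale :: "'k::field \<Rightarrow> 'k kE \<Rightarrow> 'k kE" where
  "kscale c P = Poly_Mapping.single 0 c * P"

definition kdim :: "'k::field kE set \<Rightarrow> nat" where
  "kdim V = vector_space.dim kscale V"

text \<open>dim_k (k[E_4]/N)_D = dim_k k[E_4]_D - dim_k N_D for a homogeneous ideal N.\<close>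
definition hilb_quot :: "'k::field kE set \<Rightarrow> pic \<Rightarrow> nat" where
  "hilb_quot N D = kdim (piece D :: 'k kE set) - kdim (N \<inter> piece D)"

definition tdeg :: "mon \<Rightarrow> nat" where
  "tdeg \<alpha> = (\<Sum>v\<in>all_vars. Poly_Mapping.lookup \<alpha> v)"

definition revlex_less :: "mon \<Rightarrow> mon \<Rightarrow> bool" where
  "revlex_less \<alpha> \<beta> \<longleftrightarrow> tdeg \<alpha> < tdeg \<beta> \<or>
     (tdeg \<alpha> = tdeg \<beta> \<and> (\<exists>v. Poly_Mapping.lookup \<alpha> v > Poly_Mapping.lookup \<beta> v \<and>
        (\<forall>w. vidx w > vidx v \<longrightarrow> Poly_Mapping.lookup \<alpha> w = Poly_Mapping.lookup \<beta> w)))"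

definition lead_mon :: "'k::field kE \<Rightarrow> mon" where
  "lead_mon f = (THE \<alpha>. \<alpha> \<in> Poly_Mapping.keys f \<and> (\<forall>\<beta>\<in>Poly_Mapping.keys f. \<beta> \<noteq> \<alpha> \<longrightarrow> revlex_less \<beta> \<alpha>))"

definition init_ideal :: "'k::field kE set \<Rightarrow> 'k kE set" where
  "init_ideal Q = ideal_gen {Poly_Mapping.single (lead_mon f) 1 | f. f \<in> Q \<and> f \<noteq> 0}"

text \<open>k[x,y,z] with x,y,z the variables 0,1,2.\<close>
type_synonym 'k kxyz = "(nat \<Rightarrow>\<^sub>0 nat) \<Rightarrow>\<^sub>0 'k"

definition homog :: "int \<Rightarrow> 'k::field kxyz set" where
  "homog m = {f. \<forall>\<alpha>\<in>Poly_Mapping.keys f. Poly_Mapping.keys \<alpha> \<subseteq> {0,1,2} \<and> int (Poly_Mapping.lookup \<alpha> 0 + Poly_Mapping.lookup \<alpha> 1 + Poly_Mapping.lookup \<alpha> 2) = m}"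

definition ideal_pow :: "'a::comm_ring_1 set \<Rightarrow> nat \<Rightarrow> 'a set" where
  "ideal_pow I n = ideal_gen {prod_list xs | xs. length xs = n \<and> set xs \<subseteq> I}"

text \<open>Homogeneous ideal of the point [v 0 : v 1 : v 2] of P^2.\<close>
definition point_ideal :: "(nat \<Rightarrow> 'k::field) \<Rightarrow> 'k kxyz set" where
  "point_ideal v = ideal_gen
     {Poly_Mapping.single (Poly_Mapping.single l 1) (v j)
        - Poly_Mapping.single (Poly_Mapping.single j 1) (v l) | j l. j \<in> {0,1,2} \<and> l \<in> {0,1,2}}"

text \<open>H^0(X_4, O(m l - sum a_i e_i)) = forms of degree m vanishing to order >= a_i at p_i.\<close>
definition H0 :: "(nat \<Rightarrow> nat \<Rightarrow> 'k::field) \<Rightarrow> pic \<Rightarrow> 'k kxyz set" where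
  "H0 p D = homog (coef D 0) \<inter>
     {f. \<forall>i\<in>{1..4}. f \<in> ideal_pow (point_ideal (p i)) (nat (- coef D i))}"

text \<open>The Cox ring is the graded ring (+)_D H^0(O(D)), modelled inside pic =>0 k[x,y,z]
  with the convolution product.\<close>
type_synonym 'k coxamb = "pic \<Rightarrow>\<^sub>0 'k kxyz"

definition cox :: "(nat \<Rightarrow> nat \<Rightarrow> 'k::field) \<Rightarrow> 'k coxamb set" where
  "cox p = {F. \<forall>D. Poly_Mapping.lookup F D \<in> H0 p D}"

definition det3 :: "'k::field \<Rightarrow> 'k \<Rightarrow> 'k \<Rightarrow> 'k \<Rightarrow> 'k \<Rightarrow> 'k \<Rightarrow> 'k \<Rightarrow> 'k \<Rightarrow> 'k \<Rightarrow> 'k" where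
  "det3 a b c d e f g h i = a*(e*i - f*h) - b*(d*i - f*g) + c*(d*h - e*g)"

definition general_position :: "(nat \<Rightarrow> nat \<Rightarrow> 'k::field) \<Rightarrow> bool" where
  "general_position p \<longleftrightarrow> (\<forall>i\<in>{1..4}. \<forall>j\<in>{1..4}. \<forall>l\<in>{1..4}. i \<noteq> j \<and> j \<noteq> l \<and> i \<noteq> l \<longrightarrow>
      det3 (p i 0) (p i 1) (p i 2) (p j 0) (p j 1) (p j 2) (p l 0) (p l 1) (p l 2) \<noteq> 0)"

definition sec :: "(ev \<Rightarrow> 'k::field kxyz) \<Rightarrow> ev \<Rightarrow> 'k coxamb" where
  "sec s v = Poly_Mapping.single (vdeg v) (s v)"

definition cox_eval :: "(ev \<Rightarrow> 'k::field kxyz) \<Rightarrow> 'k kE \<Rightarrow> 'k coxamb" where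
  "cox_eval s P = (\<Sum>\<alpha>\<in>Poly_Mapping.keys P. Poly_Mapping.single 0 (Poly_Mapping.single 0 (Poly_Mapping.lookup P \<alpha>))
                      * (\<Prod>v\<in>all_vars. sec s v ^ Poly_Mapping.lookup \<alpha> v))"

definition C4 :: "(ev \<Rightarrow> 'k::field kxyz) \<Rightarrow> 'k kE set" where
  "C4 s = {P. cox_eval s P = 0}"

definition Q4 :: "(ev \<Rightarrow> 'k::field kxyz) \<Rightarrow> 'k kE set" where
  "Q4 s = ideal_gen (\<Union>{C4 s \<inter> piece D | D. conic_class D})"

definition M4_gens :: "mon list" where
  "M4_gens = [Poly_Mapping.single F23 1 + Poly_Mapping.single F14 1,
              Poly_Mapping.single E1 1 + Poly_Mapping.single F14 1,
              Poly_Mapping.single E1 1 + Poly_Mapping.single F13 1,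
              Poly_Mapping.single E2 1 + Poly_Mapping.single F12 1,
              Poly_Mapping.single E1 1 + Poly_Mapping.single F12 1]"

definition M4 :: "'k::field kE set" where
  "M4 = ideal_gen ((\<lambda>\<alpha>. Poly_Mapping.single \<alpha> 1) ` set M4_gens)"

end

theory Submission
  imports Defs
begin

text \<open>
  Since \<open>M\<^sub>4\<close> is a monomial ideal, the monomials divisible by none of its five generators
  (the standard monomials) form a basis of \<open>k[E\<^sub>4]/M\<^sub>4\<close>, so its Hilbert function counts them.
  Each generator is the product of two variables whose degrees add up to a conic class \<open>c\<close>,
  and inclusion-exclusion over the generators collapses to
  \<open>N(D) = P(D) - \<Sum>\<^sub>c P(D - c) + \<Sum>\<^sub>c P(D + K + c) - P(D + K)\<close>,
  where \<open>P(D)\<close> counts all monomials of degree \<open>D\<close>. Every element of \<open>W\<^sub>4\<close> is an isometry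
  of \<open>Pic(X\<^sub>4)\<close> fixing \<open>K\<close>, so it permutes the exceptional classes (hence the variables, and
  \<open>P\<close> is invariant) and the conic classes; this gives (3). If \<open>a\<^sub>1 \<ge> 1\<close>, a standard monomial
  is divisible by \<open>e\<^sub>1\<close>, hence avoids \<open>f\<^sub>1\<^sub>2, f\<^sub>1\<^sub>3, f\<^sub>1\<^sub>4\<close> and is determined by the exponents
  of \<open>f\<^sub>2\<^sub>3, f\<^sub>2\<^sub>4, f\<^sub>3\<^sub>4\<close>, which add up to \<open>m\<close>; this gives (4).

  For (2): the section of \<open>e\<^sub>i\<close> is a nonzero constant and that of \<open>f\<^sub>i\<^sub>j\<close> a nonzero multiple of
  the line through \<open>p\<^sub>i\<close> and \<open>p\<^sub>j\<close>. Three lines through one point \<open>p\<^sub>j\<close> are linearly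
  dependent, and the three reducible conics through \<open>p\<^sub>1, \<dots>, p\<^sub>4\<close> satisfy a Pluecker relation.
  These relations live in conic degrees, and their revlex-leading monomials are the five
  generators of \<open>M\<^sub>4\<close>.
\<close>

section \<open>Monomial bases\<close>

lemma module_mult: "module ((*) :: 'a::comm_ring_1 \<Rightarrow> 'a \<Rightarrow> 'a)"
  by standard (auto simp: algebra_simps)

lemma lookup_kscale: "Poly_Mapping.lookup (kscale c P) \<alpha> = c * Poly_Mapping.lookup P \<alpha>"
  unfolding kscale_def mult_map_scale_conv_mult[symmetric]
  by (simp add: Poly_Mapping.map.rep_eq when_def)

lemma kscale_single: "kscale c (Poly_Mapping.single \<alpha> d) = Poly_Mapping.single \<alpha> (c * d)"
  by (rule poly_mapping_eqI) (simp add: lookup_kscale lookup_single when_def)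

lemma single_one_eq_iff [simp]:
  "Poly_Mapping.single x (1::'k::zero_neq_one) = Poly_Mapping.single y 1 \<longleftrightarrow> x = y"
  by (metis lookup_single_eq lookup_single_not_eq zero_neq_one)

interpretation kv: vector_space "kscale :: 'k::field \<Rightarrow> 'k kE \<Rightarrow> 'k kE"
  by standard (auto intro!: poly_mapping_eqI simp: lookup_kscale lookup_add algebra_simps)

lemma sum_single_lookup:
  fixes f :: "'a \<Rightarrow>\<^sub>0 'b::comm_monoid_add"
  assumes "finite A" "Poly_Mapping.keys f \<subseteq> A"
  shows "(\<Sum>\<alpha>\<in>A. Poly_Mapping.single \<alpha> (Poly_Mapping.lookup f \<alpha>)) = f"
  by (rule poly_mapping_eqI)
    (use assms in \<open>auto simp: lookup_sum lookup_single when_def in_keys_iff\<close>)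

lemma sum_single_lookup_keys:
  "(\<Sum>\<alpha>\<in>Poly_Mapping.keys f. Poly_Mapping.single \<alpha> (Poly_Mapping.lookup f \<alpha>)) = f"
  by (rule sum_single_lookup) simp_all

lemma kv_independent_monomials:
  "kv.independent ((\<lambda>\<alpha>. Poly_Mapping.single \<alpha> (1::'k::field)) ` A)"
  unfolding kv.independent_explicit_module
proof (intro allI impI)
  fix t u v
  assume t: "finite t" "t \<subseteq> (\<lambda>\<alpha>. Poly_Mapping.single \<alpha> (1::'k)) ` A"
    and s: "(\<Sum>v\<in>t. kscale (u v) v) = 0" and v: "v \<in> t"
  from v t obtain \<alpha> where va: "v = Poly_Mapping.single \<alpha> 1" by auto
  have "0 = Poly_Mapping.lookup (\<Sum>v\<in>t. kscale (u v) v) \<alpha>" using s by simp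
  also have "\<dots> = (\<Sum>w\<in>t. if w = v then u v else 0)"
    unfolding lookup_sum
  proof (rule sum.cong)
    fix w assume "w \<in> t"
    then obtain \<beta> where "w = Poly_Mapping.single \<beta> 1" using t by auto
    then show "Poly_Mapping.lookup (kscale (u w) w) \<alpha> = (if w = v then u v else 0)"
      using va by (auto simp: lookup_kscale lookup_single when_def)
  qed simp
  also have "\<dots> = u v" using v t(1) by simp
  finally show "u v = 0" by simp
qed

lemma kdim_supported_on: "kdim {P :: 'k::field kE. Poly_Mapping.keys P \<subseteq> A} = card A"
proof -
  let ?B = "(\<lambda>\<alpha>. Poly_Mapping.single \<alpha> (1::'k)) ` A"
  have "card ?B = kv.dim {P :: 'k kE. Poly_Mapping.keys P \<subseteq> A}"
  proof (rule kv.basis_card_eq_dim)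
    show "?B \<subseteq> {P. Poly_Mapping.keys P \<subseteq> A}" by auto
    show "kv.independent ?B" by (rule kv_independent_monomials)
    show "{P. Poly_Mapping.keys P \<subseteq> A} \<subseteq> kv.span ?B"
    proof
      fix P :: "'k kE" assume "P \<in> {P. Poly_Mapping.keys P \<subseteq> A}"
      then have "(\<Sum>\<alpha>\<in>Poly_Mapping.keys P. kscale (Poly_Mapping.lookup P \<alpha>) (Poly_Mapping.single \<alpha> 1))
          \<in> kv.span ?B"
        by (intro kv.span_sum kv.span_scale kv.span_base) auto
      then show "P \<in> kv.span ?B"
        by (simp add: kscale_single sum_single_lookup_keys)
    qed
  qed
  moreover have "card ?B = card A"
    by (rule card_image) (auto simp: inj_on_def)
  ultimately show ?thesis by (simp add: kdim_def)
qed

section \<open>Standard monomials of \<open>M\<^sub>4\<close>\<close>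

abbreviation mexp :: "mon \<Rightarrow> ev \<Rightarrow> nat" where "mexp \<equiv> Poly_Mapping.lookup"

lemma UNIV_ev: "(UNIV :: ev set) = all_vars"
  unfolding all_vars_def by (rule set_eqI, case_tac x) auto

instance ev :: finite
  by standard (simp add: UNIV_ev all_vars_def)

definition mon_dvd :: "mon \<Rightarrow> mon \<Rightarrow> bool" where
  "mon_dvd \<beta> \<alpha> \<longleftrightarrow> (\<forall>v. mexp \<beta> v \<le> mexp \<alpha> v)"

lemma mon_dvd_refl: "mon_dvd \<alpha> \<alpha>"
  by (simp add: mon_dvd_def)

lemma mon_dvd_add: "mon_dvd \<beta> \<alpha> \<Longrightarrow> mon_dvd \<beta> (\<gamma> + \<alpha>)"
  by (auto simp: mon_dvd_def lookup_add intro: trans_le_add2)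

lemma mon_dvd_diff_add: "mon_dvd \<beta> \<alpha> \<Longrightarrow> (\<alpha> - \<beta>) + \<beta> = \<alpha>"
  by (rule poly_mapping_eqI) (simp add: mon_dvd_def lookup_add lookup_minus)

definition sqfree_mon :: "ev set \<Rightarrow> mon" where
  "sqfree_mon S = Poly_Mapping.Abs_poly_mapping (\<lambda>v. if v \<in> S then 1 else 0)"

lemma mexp_sqfree_mon: "mexp (sqfree_mon S) v = (if v \<in> S then 1 else 0)"
  unfolding sqfree_mon_def by (subst lookup_Abs_poly_mapping) auto

lemma mon_dvd_sqfree_mon: "mon_dvd (sqfree_mon S) \<alpha> \<longleftrightarrow> (\<forall>v\<in>S. 1 \<le> mexp \<alpha> v)"
  by (auto simp: mon_dvd_def mexp_sqfree_mon)

definition M4_supports :: "ev set list" where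
  "M4_supports = [{F23, F14}, {E1, F14}, {E1, F13}, {E2, F12}, {E1, F12}]"

lemma M4_gens_sqfree: "M4_gens = map sqfree_mon M4_supports"
  unfolding M4_gens_def M4_supports_def
  by (auto intro!: poly_mapping_eqI simp: mexp_sqfree_mon lookup_add lookup_single when_def)

definition M4_standard :: "mon \<Rightarrow> bool" where
  "M4_standard \<alpha> \<longleftrightarrow> (\<forall>g\<in>set M4_gens. \<not> mon_dvd g \<alpha>)"

lemma M4_gens_not_standard: "g \<in> set M4_gens \<Longrightarrow> \<not> M4_standard g"
  unfolding M4_standard_def using mon_dvd_refl by blast

lemma M4_eq_nonstandard_supported:
  "(M4 :: 'k::field kE set) = {P. \<forall>\<alpha>\<in>Poly_Mapping.keys P. \<not> M4_standard \<alpha>}"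
proof
  let ?T = "{P :: 'k kE. \<forall>\<alpha>\<in>Poly_Mapping.keys P. \<not> M4_standard \<alpha>}"
  show "M4 \<subseteq> ?T"
    unfolding M4_def ideal_gen_def
  proof (rule module.span_minimal[OF module_mult])
    show "(\<lambda>\<alpha>. Poly_Mapping.single \<alpha> 1) ` set M4_gens \<subseteq> ?T"
      using M4_gens_not_standard by auto
    show "module.subspace (*) ?T"
      unfolding module.subspace_def[OF module_mult]
    proof (intro conjI ballI allI)
      fix x y assume "x \<in> ?T" "y \<in> ?T"
      then show "x + y \<in> ?T" using keys_add[of x y] by auto
    next
      fix c x assume "x \<in> ?T"
      then show "c * x \<in> ?T"
        using keys_mult[of c x] by (fastforce simp: M4_standard_def dest: mon_dvd_add)
    qed simp
  qed
  show "?T \<subseteq> M4"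
  proof
    fix P :: "'k kE" assume P: "P \<in> ?T"
    have "Poly_Mapping.single \<alpha> (Poly_Mapping.lookup P \<alpha>)
        \<in> module.span (*) ((\<lambda>\<alpha>. Poly_Mapping.single \<alpha> 1) ` set M4_gens)"
      if \<alpha>: "\<alpha> \<in> Poly_Mapping.keys P" for \<alpha>
    proof -
      obtain g where g: "g \<in> set M4_gens" "mon_dvd g \<alpha>"
        using P \<alpha> by (auto simp: M4_standard_def)
      have "Poly_Mapping.single \<alpha> (Poly_Mapping.lookup P \<alpha>)
          = Poly_Mapping.single (\<alpha> - g) (Poly_Mapping.lookup P \<alpha>) * Poly_Mapping.single g 1"
        by (simp add: mult_single mon_dvd_diff_add[OF g(2)])
      also have "\<dots> \<in> module.span (*) ((\<lambda>\<alpha>. Poly_Mapping.single \<alpha> 1) ` set M4_gens)"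
        by (intro module.span_scale[OF module_mult] module.span_base[OF module_mult]) (use g in auto)
      finally show ?thesis .
    qed
    then have "(\<Sum>\<alpha>\<in>Poly_Mapping.keys P. Poly_Mapping.single \<alpha> (Poly_Mapping.lookup P \<alpha>)) \<in> M4"
      unfolding M4_def ideal_gen_def by (intro module.span_sum[OF module_mult])
    then show "P \<in> M4" by (simp add: sum_single_lookup_keys)
  qed
qed

definition mons_of_deg :: "pic \<Rightarrow> mon set" where
  "mons_of_deg D = {\<alpha>. mdeg \<alpha> = D}"

lemma mdeg_explicit: "mdeg \<alpha> =
  (int (mexp \<alpha> F12) + int (mexp \<alpha> F13) + int (mexp \<alpha> F23) + int (mexp \<alpha> F14) + int (mexp \<alpha> F24) + int (mexp \<alpha> F34),
   int (mexp \<alpha> E1) - int (mexp \<alpha> F12) - int (mexp \<alpha> F13) - int (mexp \<alpha> F14),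
   int (mexp \<alpha> E2) - int (mexp \<alpha> F12) - int (mexp \<alpha> F23) - int (mexp \<alpha> F24),
   int (mexp \<alpha> E3) - int (mexp \<alpha> F13) - int (mexp \<alpha> F23) - int (mexp \<alpha> F34),
   int (mexp \<alpha> E4) - int (mexp \<alpha> F14) - int (mexp \<alpha> F24) - int (mexp \<alpha> F34))"
  unfolding mdeg_def all_vars_def by simp

lemma mdeg_add: "mdeg (\<alpha> + \<beta>) = mdeg \<alpha> + mdeg \<beta>"
  unfolding mdeg_explicit by (simp add: lookup_add)

lemma mdeg_single: "mdeg (Poly_Mapping.single v 1) = vdeg v"
  by (cases v) (simp_all add: mdeg_explicit lookup_single)

lemma finite_bounded_mons: "finite {\<alpha> :: mon. \<forall>v. mexp \<alpha> v \<le> B}"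
proof (rule finite_imageD)
  have "finite {f :: ev \<Rightarrow> nat. \<forall>v. (v \<in> UNIV \<longrightarrow> f v \<in> {..B}) \<and> (v \<notin> UNIV \<longrightarrow> f v = 0)}"
    by (rule finite_set_of_finite_funs) auto
  then show "finite (mexp ` {\<alpha>. \<forall>v. mexp \<alpha> v \<le> B})"
    by (rule finite_subset[rotated]) auto
  show "inj_on mexp {\<alpha>. \<forall>v. mexp \<alpha> v \<le> B}"
    by (auto simp: inj_on_def poly_mapping_eqI)
qed

lemma finite_mons_of_deg: "finite (mons_of_deg D)"
proof -
  obtain m a1 a2 a3 a4 where D: "D = (m, a1, a2, a3, a4)" by (cases D) auto
  define B where "B = nat (\<bar>m\<bar> + \<bar>a1\<bar> + \<bar>a2\<bar> + \<bar>a3\<bar> + \<bar>a4\<bar>)"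
  have "mexp \<alpha> v \<le> B" if "mdeg \<alpha> = D" for \<alpha> v
  proof -
    have "int (mexp \<alpha> F12) + int (mexp \<alpha> F13) + int (mexp \<alpha> F23) + int (mexp \<alpha> F14)
          + int (mexp \<alpha> F24) + int (mexp \<alpha> F34) = m"
      "int (mexp \<alpha> E1) - int (mexp \<alpha> F12) - int (mexp \<alpha> F13) - int (mexp \<alpha> F14) = a1"
      "int (mexp \<alpha> E2) - int (mexp \<alpha> F12) - int (mexp \<alpha> F23) - int (mexp \<alpha> F24) = a2"
      "int (mexp \<alpha> E3) - int (mexp \<alpha> F13) - int (mexp \<alpha> F23) - int (mexp \<alpha> F34) = a3"
      "int (mexp \<alpha> E4) - int (mexp \<alpha> F14) - int (mexp \<alpha> F24) - int (mexp \<alpha> F34) = a4"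
      using that unfolding D mdeg_explicit by simp_all
    then have "int (mexp \<alpha> v) \<le> \<bar>m\<bar> + \<bar>a1\<bar> + \<bar>a2\<bar> + \<bar>a3\<bar> + \<bar>a4\<bar>"
      by (cases v) (hypsubst, linarith)+
    then show ?thesis unfolding B_def by linarith
  qed
  then have "mons_of_deg D \<subseteq> {\<alpha>. \<forall>v. mexp \<alpha> v \<le> B}" by (auto simp: mons_of_deg_def)
  then show ?thesis using finite_bounded_mons finite_subset by blast
qed

lemma hilb_quot_M4: "hilb_quot (M4 :: 'k::field kE set) D = card {\<alpha> \<in> mons_of_deg D. M4_standard \<alpha>}"
proof -
  have piece: "piece D = {P. Poly_Mapping.keys P \<subseteq> mons_of_deg D}"
    unfolding piece_def mons_of_deg_def by auto
  have "(M4 :: 'k kE set) \<inter> piece D = {P. Poly_Mapping.keys P \<subseteq> {\<alpha> \<in> mons_of_deg D. \<not> M4_standard \<alpha>}}"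
    unfolding M4_eq_nonstandard_supported piece by auto
  then have "hilb_quot (M4 :: 'k kE set) D
      = card (mons_of_deg D) - card {\<alpha> \<in> mons_of_deg D. \<not> M4_standard \<alpha>}"
    unfolding hilb_quot_def piece by (simp only: kdim_supported_on)
  also have "\<dots> = card (mons_of_deg D - {\<alpha> \<in> mons_of_deg D. \<not> M4_standard \<alpha>})"
    by (rule card_Diff_subset[symmetric]) (use finite_mons_of_deg in auto)
  also have "mons_of_deg D - {\<alpha> \<in> mons_of_deg D. \<not> M4_standard \<alpha>} = {\<alpha> \<in> mons_of_deg D. M4_standard \<alpha>}"
    by auto
  finally show ?thesis .
qed

section \<open>Exceptional and conic classes\<close>

lemma inter_explicit:
  "inter (m, a1, a2, a3, a4) (n, b1, b2, b3, b4) = m*n - a1*b1 - a2*b2 - a3*b3 - a4*b4"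
proof -
  have "{1..4::nat} = {1,2,3,4}" by auto
  then show ?thesis unfolding inter_def by simp
qed

lemma inter_zero_left [simp]: "inter 0 D = 0"
  by (cases D) (simp add: zero_prod_def inter_explicit)

lemma inter_nondegenerate:
  assumes "\<And>D. inter x D = 0"
  shows "x = 0"
proof -
  obtain m a1 a2 a3 a4 where x: "x = (m, a1, a2, a3, a4)" by (cases x) auto
  show ?thesis
    using assms[of "(1,0,0,0,0)"] assms[of "(0,1,0,0,0)"] assms[of "(0,0,1,0,0)"]
      assms[of "(0,0,0,1,0)"] assms[of "(0,0,0,0,1)"]
    unfolding x by (simp add: inter_explicit zero_prod_def)
qed

lemma square_sum4_le: "((a::int) + b + c + d) * (a + b + c + d) \<le> 4 * (a*a + b*b + c*c + d*d)"
proof -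
  have "4 * (a*a + b*b + c*c + d*d) - (a + b + c + d) * (a + b + c + d)
      = (a-b)*(a-b) + (a-c)*(a-c) + (a-d)*(a-d) + (b-c)*(b-c) + (b-d)*(b-d) + (c-d)*(c-d)"
    by algebra
  moreover have "0 \<le> (a-b)*(a-b) + (a-c)*(a-c) + (a-d)*(a-d) + (b-c)*(b-c) + (b-d)*(b-d) + (c-d)*(c-d)"
    by (intro add_nonneg_nonneg) simp_all
  ultimately show ?thesis by linarith
qed

lemma sum4_pronic_eq_0:
  fixes a b c d :: int
  assumes "a*(a-1) + b*(b-1) + c*(c-1) + d*(d-1) = 0"
  shows "a \<in> {0,1} \<and> b \<in> {0,1} \<and> c \<in> {0,1} \<and> d \<in> {0,1}"
proof -
  have nonneg: "0 \<le> x*(x-1)" for x :: int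
    by (cases "x \<le> 0") (auto intro: mult_nonpos_nonpos mult_nonneg_nonneg)
  have "a*(a-1) = 0" "b*(b-1) = 0" "c*(c-1) = 0" "d*(d-1) = 0"
    using assms nonneg[of a] nonneg[of b] nonneg[of c] nonneg[of d] by linarith+
  then show ?thesis by auto
qed

lemma range_vdeg: "range vdeg = {(0,1,0,0,0), (0,0,1,0,0), (0,0,0,1,0), (0,0,0,0,1),
   (1,-1,-1,0,0), (1,-1,0,-1,0), (1,0,-1,-1,0), (1,-1,0,0,-1), (1,0,-1,0,-1), (1,0,0,-1,-1)}"
  unfolding UNIV_ev all_vars_def by simp

lemma exceptional_class_in_range_vdeg:
  assumes "inter D D = -1" "inter canK D = -1"
  shows "D \<in> range vdeg"
proof -
  obtain m a b c d where D: "D = (m, a, b, c, d)" by (cases D) auto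
  have h1: "m*m - a*a - b*b - c*c - d*d = -1" and h2: "a + b + c + d = 1 - 3*m"
    using assms unfolding D canK_def inter_explicit by simp_all
  have "(1 - 3*m) * (1 - 3*m) \<le> 4 * (m*m + 1)" using square_sum4_le[of a b c d] h1 h2 by simp
  then have bound: "5 * (m*m) \<le> 6*m + 3" by (simp add: algebra_simps)
  have "m = 0 \<or> m = 1"
  proof (rule ccontr)
    assume "\<not> (m = 0 \<or> m = 1)"
    then have "m \<ge> 2 \<or> m \<le> -1" by linarith
    moreover have "m \<ge> 2 \<Longrightarrow> 2*m \<le> m*m" by (simp add: mult_right_mono)
    ultimately show False using bound zero_le_square[of m] by linarith
  qed
  then show ?thesis
  proof
    assume m: "m = 0"
    then have "a*(a-1) + b*(b-1) + c*(c-1) + d*(d-1) = 0" using h1 h2 by (simp add: algebra_simps)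
    then have "a \<in> {0,1} \<and> b \<in> {0,1} \<and> c \<in> {0,1} \<and> d \<in> {0,1}" by (rule sum4_pronic_eq_0)
    then show ?thesis using h2 m unfolding D range_vdeg by (elim conjE insertE emptyE) simp_all
  next
    assume m: "m = 1"
    then have "(-a)*(-a-1) + (-b)*(-b-1) + (-c)*(-c-1) + (-d)*(-d-1) = 0"
      using h1 h2 by (simp add: algebra_simps)
    then have "-a \<in> {0,1} \<and> -b \<in> {0,1} \<and> -c \<in> {0,1} \<and> -d \<in> {0,1}" by (rule sum4_pronic_eq_0)
    then show ?thesis using h2 m unfolding D range_vdeg by (elim conjE insertE emptyE) simp_all
  qed
qed

definition conic_classes :: "pic set" where
  "conic_classes = {(1,-1,0,0,0), (1,0,-1,0,0), (1,0,0,-1,0), (1,0,0,0,-1), (2,-1,-1,-1,-1)}"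

lemma conic_class_iff: "conic_class D \<longleftrightarrow> D \<in> conic_classes"
proof
  assume "D \<in> conic_classes" then show "conic_class D"
    unfolding conic_classes_def conic_class_def canK_def by (auto simp: inter_explicit)
next
  assume "conic_class D"
  obtain m a b c d where D: "D = (m, a, b, c, d)" by (cases D) auto
  have h1: "m*m - a*a - b*b - c*c - d*d = 0" and h2: "a + b + c + d = 2 - 3*m"
    using \<open>conic_class D\<close> unfolding D canK_def conic_class_def inter_explicit by simp_all
  have "(2 - 3*m) * (2 - 3*m) \<le> 4 * (m*m)" using square_sum4_le[of a b c d] h1 h2 by simp
  then have bound: "5 * (m*m) + 4 \<le> 12*m" by (simp add: algebra_simps)
  have "m = 1 \<or> m = 2"
  proof (rule ccontr)
    assume "\<not> (m = 1 \<or> m = 2)"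
    then have "m \<ge> 3 \<or> m \<le> 0" by linarith
    moreover have "m \<ge> 3 \<Longrightarrow> 3*m \<le> m*m" by (simp add: mult_right_mono)
    ultimately show False using bound zero_le_square[of m] by linarith
  qed
  then show "D \<in> conic_classes"
  proof
    assume m: "m = 1"
    then have "(-a)*(-a-1) + (-b)*(-b-1) + (-c)*(-c-1) + (-d)*(-d-1) = 0"
      using h1 h2 by (simp add: algebra_simps)
    then have "-a \<in> {0,1} \<and> -b \<in> {0,1} \<and> -c \<in> {0,1} \<and> -d \<in> {0,1}" by (rule sum4_pronic_eq_0)
    then show ?thesis using h2 m unfolding D conic_classes_def by (elim conjE insertE emptyE) simp_all
  next
    assume m: "m = 2"
    then have "(a+1)*(a+1-1) + (b+1)*(b+1-1) + (c+1)*(c+1-1) + (d+1)*(d+1-1) = 0"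
      using h1 h2 by (simp add: algebra_simps)
    then have "a+1 \<in> {0,1} \<and> b+1 \<in> {0,1} \<and> c+1 \<in> {0,1} \<and> d+1 \<in> {0,1}" by (rule sum4_pronic_eq_0)
    then show ?thesis using h2 m unfolding D conic_classes_def by (elim conjE insertE emptyE) simp_all
  qed
qed

section \<open>Counting standard monomials\<close>

definition count_avoiding :: "pic \<Rightarrow> ev set list \<Rightarrow> ev set \<Rightarrow> nat" where
  "count_avoiding D Vs R = card {\<alpha> \<in> mons_of_deg D. mon_dvd (sqfree_mon R) \<alpha> \<and>
     (\<forall>V\<in>set Vs. \<not> mon_dvd (sqfree_mon V) \<alpha>)}"

lemma count_avoiding_Cons:
  "int (count_avoiding D (V # Vs) R) = int (count_avoiding D Vs R) - int (count_avoiding D Vs (V \<union> R))"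
proof -
  let ?A = "{\<alpha> \<in> mons_of_deg D. mon_dvd (sqfree_mon R) \<alpha> \<and> (\<forall>V\<in>set Vs. \<not> mon_dvd (sqfree_mon V) \<alpha>)}"
  let ?B = "{\<alpha> \<in> mons_of_deg D. mon_dvd (sqfree_mon (V \<union> R)) \<alpha> \<and> (\<forall>V\<in>set Vs. \<not> mon_dvd (sqfree_mon V) \<alpha>)}"
  have BA: "?B \<subseteq> ?A" by (auto simp: mon_dvd_sqfree_mon)
  have fin: "finite ?A" by (rule finite_subset[OF _ finite_mons_of_deg]) auto
  have "{\<alpha> \<in> mons_of_deg D. mon_dvd (sqfree_mon R) \<alpha> \<and> (\<forall>V\<in>set (V # Vs). \<not> mon_dvd (sqfree_mon V) \<alpha>)}
      = ?A - ?B"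
    by (auto simp: mon_dvd_sqfree_mon)
  then show ?thesis
    unfolding count_avoiding_def
    using card_Diff_subset[OF finite_subset[OF BA fin] BA] card_mono[OF fin BA] by (simp add: of_nat_diff)
qed

lemma count_avoiding_Nil: "count_avoiding D [] R = card (mons_of_deg (D - mdeg (sqfree_mon R)))"
proof -
  let ?s = "sqfree_mon R"
  have "{\<alpha> \<in> mons_of_deg D. mon_dvd ?s \<alpha>} = (\<lambda>\<beta>. \<beta> + ?s) ` mons_of_deg (D - mdeg ?s)"
  proof (intro set_eqI iffI)
    fix \<alpha> assume \<alpha>: "\<alpha> \<in> {\<alpha> \<in> mons_of_deg D. mon_dvd ?s \<alpha>}"
    then have "mdeg \<alpha> = mdeg (\<alpha> - ?s) + mdeg ?s"
      using mdeg_add[of "\<alpha> - ?s" ?s] by (simp add: mon_dvd_diff_add)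
    then have "\<alpha> - ?s \<in> mons_of_deg (D - mdeg ?s)" using \<alpha> by (simp add: mons_of_deg_def eq_diff_eq)
    then show "\<alpha> \<in> (\<lambda>\<beta>. \<beta> + ?s) ` mons_of_deg (D - mdeg ?s)"
      by (rule rev_image_eqI) (use \<alpha> in \<open>simp add: mon_dvd_diff_add\<close>)
  next
    fix \<alpha> assume "\<alpha> \<in> (\<lambda>\<beta>. \<beta> + ?s) ` mons_of_deg (D - mdeg ?s)"
    then show "\<alpha> \<in> {\<alpha> \<in> mons_of_deg D. mon_dvd ?s \<alpha>}"
      by (auto simp: mons_of_deg_def mdeg_add intro: mon_dvd_add[OF mon_dvd_refl])
  qed
  moreover have "inj_on (\<lambda>\<beta>. \<beta> + ?s) (mons_of_deg (D - mdeg ?s))"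
    by (auto simp: inj_on_def)
  ultimately show ?thesis unfolding count_avoiding_def by (simp add: card_image)
qed

definition n_mons :: "pic \<Rightarrow> int" where
  "n_mons D = int (card (mons_of_deg D))"

definition n_standard :: "pic \<Rightarrow> int" where
  "n_standard D = int (card {\<alpha> \<in> mons_of_deg D. M4_standard \<alpha>})"

lemma n_standard_formula:
  "n_standard D = n_mons D - (\<Sum>c\<in>conic_classes. n_mons (D - c))
     + (\<Sum>c\<in>conic_classes. n_mons (D + canK + c)) - n_mons (D + canK)"
proof -
  obtain m a1 a2 a3 a4 where D: "D = (m, a1, a2, a3, a4)" by (cases D) auto
  have "n_standard D = int (count_avoiding D M4_supports {})"
    unfolding n_standard_def count_avoiding_def M4_standard_def M4_gens_sqfree
    by (simp add: mon_dvd_sqfree_mon)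
  then show ?thesis
    unfolding M4_supports_def count_avoiding_Cons count_avoiding_Nil n_mons_def[symmetric]
      conic_classes_def canK_def D
    by (simp add: mdeg_explicit mexp_sqfree_mon)
qed

section \<open>Isometries of the Picard lattice\<close>

lemma pscale_0: "pscale 0 D = 0"
  by (cases D) (simp add: zero_prod_def)

lemma pscale_Suc: "pscale (Suc n) D = D + pscale n D"
  by (cases D) (simp add: algebra_simps)

lemma inj_vdeg: "inj vdeg"
  unfolding inj_def by (intro allI, case_tac x; case_tac y; simp)

lemma mdeg_UNIV: "mdeg \<alpha> = (\<Sum>v\<in>UNIV. pscale (mexp \<alpha> v) (vdeg v))"
  unfolding mdeg_def UNIV_ev ..

locale pic_isometry =
  fixes g :: "pic \<Rightarrow> pic"
  assumes g_add: "\<And>x y. g (x + y) = g x + g y"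
    and g_inter: "\<And>x y. inter (g x) (g y) = inter x y"
    and g_canK: "g canK = canK"
begin

lemma g_0: "g 0 = 0"
  using g_add[of 0 0] by simp

lemma g_diff: "g (x - y) = g x - g y"
  using g_add[of "x - y" y] by (simp add: eq_diff_eq)

lemma g_inj: "inj g"
proof (rule injI)
  fix x y assume "g x = g y"
  then have "inter (x - y) z = 0" for z
    using g_inter[of "x - y" z] by (simp add: g_diff)
  then show "x = y" using inter_nondegenerate[of "x - y"] by simp
qed

lemma g_pscale: "g (pscale n x) = pscale n (g x)"
  by (induction n) (simp_all add: pscale_0 pscale_Suc g_0 g_add)

lemma g_sum: "g (sum f A) = (\<Sum>a\<in>A. g (f a))"
  by (induction A rule: infinite_finite_induct) (simp_all add: g_0 g_add)

lemma g_vdeg_in_range: "g (vdeg v) \<in> range vdeg"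
proof (rule exceptional_class_in_range_vdeg)
  show "inter (g (vdeg v)) (g (vdeg v)) = -1"
    unfolding g_inter by (cases v) (simp_all add: inter_explicit)
  show "inter canK (g (vdeg v)) = -1"
    using g_inter[of canK "vdeg v"] g_canK by (cases v) (simp_all add: inter_explicit canK_def)
qed

definition var_perm :: "ev \<Rightarrow> ev" where
  "var_perm v = (SOME w. vdeg w = g (vdeg v))"

lemma vdeg_var_perm: "vdeg (var_perm v) = g (vdeg v)"
  unfolding var_perm_def using g_vdeg_in_range[of v] by (auto intro: someI)

lemma bij_var_perm: "bij var_perm"
proof -
  have "inj var_perm"
    by (rule injI) (metis vdeg_var_perm g_inj inj_vdeg injD)
  then show ?thesis by (simp add: bij_def finite_UNIV_inj_surj)
qed

definition mon_perm :: "mon \<Rightarrow> mon" where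
  "mon_perm \<alpha> = Poly_Mapping.Abs_poly_mapping (\<lambda>w. mexp \<alpha> (inv var_perm w))"

lemma mexp_mon_perm: "mexp (mon_perm \<alpha>) w = mexp \<alpha> (inv var_perm w)"
  unfolding mon_perm_def by (subst lookup_Abs_poly_mapping) auto

lemma mexp_mon_perm_var_perm: "mexp (mon_perm \<alpha>) (var_perm v) = mexp \<alpha> v"
  using bij_var_perm by (simp add: mexp_mon_perm bij_is_inj)

lemma mdeg_mon_perm: "mdeg (mon_perm \<alpha>) = g (mdeg \<alpha>)"
proof -
  have "mdeg (mon_perm \<alpha>) = (\<Sum>w\<in>var_perm ` UNIV. pscale (mexp (mon_perm \<alpha>) w) (vdeg w))"
    unfolding mdeg_UNIV using bij_var_perm by (simp add: bij_is_surj)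
  also have "\<dots> = (\<Sum>v\<in>UNIV. pscale (mexp \<alpha> v) (g (vdeg v)))"
    using bij_var_perm by (simp add: sum.reindex bij_is_inj mexp_mon_perm_var_perm vdeg_var_perm)
  also have "\<dots> = g (mdeg \<alpha>)"
    unfolding mdeg_UNIV g_sum g_pscale ..
  finally show ?thesis .
qed

lemma bij_mon_perm: "bij mon_perm"
proof (rule bijI)
  show "inj mon_perm"
    by (rule injI, rule poly_mapping_eqI) (metis mexp_mon_perm_var_perm)
  show "surj mon_perm"
  proof (rule surjI)
    fix \<beta> :: mon
    define \<alpha> where "\<alpha> = Poly_Mapping.Abs_poly_mapping (\<lambda>v. mexp \<beta> (var_perm v))"
    have "mexp \<alpha> v = mexp \<beta> (var_perm v)" for v
      unfolding \<alpha>_def by (subst lookup_Abs_poly_mapping) auto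
    then show "mon_perm \<alpha> = \<beta>"
      using bij_var_perm by (intro poly_mapping_eqI) (simp add: mexp_mon_perm bij_is_surj surj_f_inv_f)
  qed
qed

lemma n_mons_g: "n_mons (g D) = n_mons D"
proof -
  have "mon_perm ` mons_of_deg D = mons_of_deg (g D)"
  proof (intro set_eqI iffI)
    fix \<beta> assume "\<beta> \<in> mon_perm ` mons_of_deg D"
    then show "\<beta> \<in> mons_of_deg (g D)" by (auto simp: mons_of_deg_def mdeg_mon_perm)
  next
    fix \<beta> assume \<beta>: "\<beta> \<in> mons_of_deg (g D)"
    obtain \<alpha> where \<alpha>: "\<beta> = mon_perm \<alpha>" using bij_is_surj[OF bij_mon_perm] by (metis surjD)
    then have "g (mdeg \<alpha>) = g D" using \<beta> by (simp add: mons_of_deg_def mdeg_mon_perm)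
    then have "\<alpha> \<in> mons_of_deg D" using g_inj by (simp add: mons_of_deg_def inj_eq)
    then show "\<beta> \<in> mon_perm ` mons_of_deg D" using \<alpha> by blast
  qed
  moreover have "inj_on mon_perm (mons_of_deg D)"
    using bij_is_inj[OF bij_mon_perm] by (rule inj_on_subset) simp
  ultimately show ?thesis unfolding n_mons_def by (metis card_image)
qed

lemma g_conic_classes: "g ` conic_classes = conic_classes"
proof (rule endo_inj_surj)
  show "finite conic_classes" unfolding conic_classes_def by simp
  have "conic_class (g D) \<longleftrightarrow> conic_class D" for D
    unfolding conic_class_def using g_inter[of canK D] g_canK by (simp add: g_inter)
  then show "g ` conic_classes \<subseteq> conic_classes" by (auto simp: conic_class_iff[symmetric])
  show "inj_on g conic_classes" using g_inj by (rule inj_on_subset) simp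
qed

lemma sum_conic_classes_g: "(\<Sum>c\<in>conic_classes. f (g c)) = (\<Sum>c\<in>conic_classes. f c)"
  using sum.reindex[OF inj_on_subset[OF g_inj], of conic_classes f] by (simp add: g_conic_classes)

lemma n_standard_g: "n_standard (g D) = n_standard D"
proof -
  have "n_mons (g D - g c) = n_mons (D - c)" "n_mons (g D + canK + g c) = n_mons (D + canK + c)" for c
    using n_mons_g[of "D - c"] n_mons_g[of "D + canK + c"] by (simp_all add: g_diff g_add g_canK)
  then have "(\<Sum>c\<in>conic_classes. n_mons (g D - c)) = (\<Sum>c\<in>conic_classes. n_mons (D - c))"
    "(\<Sum>c\<in>conic_classes. n_mons (g D + canK + c)) = (\<Sum>c\<in>conic_classes. n_mons (D + canK + c))"
    using sum_conic_classes_g[of "\<lambda>c. n_mons (g D - c)"]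
      sum_conic_classes_g[of "\<lambda>c. n_mons (g D + canK + c)"] by simp_all
  moreover have "n_mons (g D + canK) = n_mons (D + canK)"
    using n_mons_g[of "D + canK"] by (simp add: g_add g_canK)
  ultimately show ?thesis unfolding n_standard_formula by (simp add: n_mons_g)
qed

end

lemma pic_isometry_id: "pic_isometry id"
  unfolding pic_isometry_def by simp

lemma pic_isometry_comp:
  assumes "pic_isometry g" "pic_isometry h"
  shows "pic_isometry (h \<circ> g)"
proof -
  interpret g: pic_isometry g by fact
  interpret h: pic_isometry h by fact
  show ?thesis by standard (simp_all add: g.g_add h.g_add g.g_inter h.g_inter g.g_canK h.g_canK)
qed

section \<open>The Weyl group\<close>

lemma sigmaW_isometry: "pic_isometry sigmaW"
proof
  fix x y :: pic
  show "sigmaW (x + y) = sigmaW x + sigmaW y"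
    by (cases x; cases y) (simp add: algebra_simps)
  show "inter (sigmaW x) (sigmaW y) = inter x y"
    by (cases x; cases y) (simp add: inter_explicit algebra_simps)
qed (simp add: canK_def)

lemma coef_mkpic: "i \<le> 4 \<Longrightarrow> coef (mkpic f) i = f i"
  unfolding mkpic_def by (cases "i = 0"; cases "i = 1"; cases "i = 2"; cases "i = 3"; cases "i = 4") auto

lemma pic_eqI: "(\<And>i. i \<le> 4 \<Longrightarrow> coef D i = coef D' i) \<Longrightarrow> D = D'"
proof -
  assume h: "\<And>i. i \<le> 4 \<Longrightarrow> coef D i = coef D' i"
  obtain m a1 a2 a3 a4 where D: "D = (m, a1, a2, a3, a4)" by (cases D) auto
  obtain n b1 b2 b3 b4 where D': "D' = (n, b1, b2, b3, b4)" by (cases D') auto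
  show "D = D'" using h[of 0] h[of 1] h[of 2] h[of 3] h[of 4] unfolding D D' by simp
qed

lemma coef_add: "coef (D + D') i = coef D i + coef D' i"
  by (cases D; cases D') simp

lemma coef_canK: "i \<in> {1..4} \<Longrightarrow> coef canK i = 1"
  unfolding canK_def by auto

lemma perm_map_isometry:
  assumes bij: "bij_betw \<pi> {1..4::nat} {1..4}" and fix0: "\<forall>i. i \<notin> {1..4} \<longrightarrow> \<pi> i = i"
  shows "pic_isometry (\<lambda>D. mkpic (\<lambda>i. coef D (\<pi> i)))"
proof
  have p0: "\<pi> 0 = 0" using fix0 by simp
  fix x y :: pic
  show "mkpic (\<lambda>i. coef (x + y) (\<pi> i)) = mkpic (\<lambda>i. coef x (\<pi> i)) + mkpic (\<lambda>i. coef y (\<pi> i))"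
    by (rule pic_eqI) (simp add: coef_mkpic coef_add)
  have "(\<Sum>i\<in>{1..4}. coef x (\<pi> i) * coef y (\<pi> i)) = (\<Sum>j\<in>{1..4}. coef x j * coef y j)"
    by (rule sum.reindex_bij_betw[OF bij])
  then show "inter (mkpic (\<lambda>i. coef x (\<pi> i))) (mkpic (\<lambda>i. coef y (\<pi> i))) = inter x y"
    unfolding inter_def by (simp add: coef_mkpic p0)
  have "coef canK (\<pi> i) = coef canK i" if "i \<le> 4" for i
    using that bij_betw_apply[OF bij, of i] p0 by (cases "i = 0") (auto simp: coef_canK)
  then show "mkpic (\<lambda>i. coef canK (\<pi> i)) = canK"
    by (intro pic_eqI) (simp add: coef_mkpic)
qed

lemma W4_isometry: "g \<in> W4 \<Longrightarrow> pic_isometry g"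
proof (induction rule: W4.induct)
  case W4_id
  then show ?case by (rule pic_isometry_id)
next
  case (W4_step g h)
  have "pic_isometry h"
    using W4_step.hyps(2) sigmaW_isometry perm_map_isometry unfolding perm_maps_def by auto
  then show ?case using W4_step.IH by (rule pic_isometry_comp[rotated])
qed

lemma hilb_quot_M4_W4_invariant:
  "g \<in> W4 \<Longrightarrow> hilb_quot (M4 :: 'k::field kE set) (g D) = hilb_quot (M4 :: 'k kE set) D"
  using pic_isometry.n_standard_g[OF W4_isometry] unfolding n_standard_def hilb_quot_M4 by simp

section \<open>Standard monomials of large degree\<close>

lemma card_sum2_eq: "card {(i::nat, j::nat). i + j = n} = n + 1"
proof -
  have "{(i::nat, j::nat). i + j = n} = (\<lambda>i. (i, n - i)) ` {0..n}" by auto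
  moreover have "inj_on (\<lambda>i. (i, n - i)) {0..n}" by (auto simp: inj_on_def)
  ultimately show ?thesis by (simp add: card_image)
qed

lemma card_sum2_le: "card {(i::nat, j::nat). i + j \<le> m} = (m + 2) choose 2"
proof (induction m)
  case 0
  have "{(i::nat, j::nat). i + j \<le> 0} = {(0,0)}" by auto
  then show ?case by (simp add: numeral_2_eq_2)
next
  case (Suc m)
  have fin: "finite {(i::nat, j::nat). i + j \<le> n}" for n
    by (rule finite_subset[of _ "{0..n} \<times> {0..n}"]) auto
  have "{(i::nat, j::nat). i + j \<le> Suc m} = {(i, j). i + j \<le> m} \<union> {(i, j). i + j = Suc m}" by auto
  moreover have "{(i::nat, j::nat). i + j \<le> m} \<inter> {(i, j). i + j = Suc m} = {}" by auto
  moreover have "finite {(i::nat, j::nat). i + j = Suc m}"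
    by (rule finite_subset[OF _ fin[of "Suc m"]]) auto
  ultimately have "card {(i::nat, j::nat). i + j \<le> Suc m}
      = card {(i::nat, j::nat). i + j \<le> m} + card {(i::nat, j::nat). i + j = Suc m}"
    using fin[of m] by (simp add: card_Un_disjoint)
  also have "\<dots> = (m + 2 choose 2) + (m + 2)" using Suc card_sum2_eq by simp
  also have "\<dots> = Suc m + 2 choose 2"
    using binomial_Suc_Suc[of "Suc (Suc m)" "Suc 0"] by (simp add: numeral_2_eq_2)
  finally show ?case .
qed

lemma card_sum3_eq: "card {(i::nat, j::nat, k::nat). i + j + k = m} = (m + 2) choose 2"
proof -
  have "{(i::nat, j::nat, k::nat). i + j + k = m} = (\<lambda>(i, j). (i, j, m - i - j)) ` {(i, j). i + j \<le> m}"
    by force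
  moreover have "inj_on (\<lambda>(i, j). (i, j, m - i - j)) {(i::nat, j::nat). i + j \<le> m}"
    by (auto simp: inj_on_def)
  ultimately show ?thesis by (simp add: card_image card_sum2_le)
qed

lemma M4_standard_of_deg_iff:
  assumes "1 \<le> a1"
  shows "\<alpha> \<in> mons_of_deg (int m, a1, a2, a3, a4) \<and> M4_standard \<alpha> \<longleftrightarrow>
    mexp \<alpha> F12 = 0 \<and> mexp \<alpha> F13 = 0 \<and> mexp \<alpha> F14 = 0 \<and> mexp \<alpha> F23 + mexp \<alpha> F24 + mexp \<alpha> F34 = m \<and>
    int (mexp \<alpha> E1) = a1 \<and> int (mexp \<alpha> E2) = a2 + int (mexp \<alpha> F23) + int (mexp \<alpha> F24) \<and>
    int (mexp \<alpha> E3) = a3 + int (mexp \<alpha> F23) + int (mexp \<alpha> F34) \<and>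
    int (mexp \<alpha> E4) = a4 + int (mexp \<alpha> F24) + int (mexp \<alpha> F34)"
    (is "?L \<longleftrightarrow> ?R")
proof
  have std: "M4_standard \<alpha> \<longleftrightarrow> \<not> (1 \<le> mexp \<alpha> F23 \<and> 1 \<le> mexp \<alpha> F14) \<and> \<not> (1 \<le> mexp \<alpha> E1 \<and> 1 \<le> mexp \<alpha> F14)
     \<and> \<not> (1 \<le> mexp \<alpha> E1 \<and> 1 \<le> mexp \<alpha> F13) \<and> \<not> (1 \<le> mexp \<alpha> E2 \<and> 1 \<le> mexp \<alpha> F12)
     \<and> \<not> (1 \<le> mexp \<alpha> E1 \<and> 1 \<le> mexp \<alpha> F12)"
    by (simp add: M4_standard_def M4_gens_sqfree M4_supports_def mon_dvd_sqfree_mon)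
  assume L: ?L
  then have eqs: "int (mexp \<alpha> F12) + int (mexp \<alpha> F13) + int (mexp \<alpha> F23) + int (mexp \<alpha> F14)
        + int (mexp \<alpha> F24) + int (mexp \<alpha> F34) = int m"
    "int (mexp \<alpha> E1) - int (mexp \<alpha> F12) - int (mexp \<alpha> F13) - int (mexp \<alpha> F14) = a1"
    "int (mexp \<alpha> E2) - int (mexp \<alpha> F12) - int (mexp \<alpha> F23) - int (mexp \<alpha> F24) = a2"
    "int (mexp \<alpha> E3) - int (mexp \<alpha> F13) - int (mexp \<alpha> F23) - int (mexp \<alpha> F34) = a3"
    "int (mexp \<alpha> E4) - int (mexp \<alpha> F14) - int (mexp \<alpha> F24) - int (mexp \<alpha> F34) = a4"
    by (simp_all add: mons_of_deg_def mdeg_explicit)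
  have "1 \<le> mexp \<alpha> E1" using eqs(2) assms by linarith
  then have "mexp \<alpha> F12 = 0" "mexp \<alpha> F13 = 0" "mexp \<alpha> F14 = 0" using L std by auto
  then show ?R using eqs by simp
next
  assume ?R
  then show ?L
    by (simp add: M4_standard_def M4_gens_sqfree M4_supports_def mon_dvd_sqfree_mon
        mons_of_deg_def mdeg_explicit)
qed

lemma card_M4_standard_of_deg:
  assumes a: "1 \<le> a1" "0 \<le> a2" "0 \<le> a3" "0 \<le> a4"
  shows "card {\<alpha> \<in> mons_of_deg (int m, a1, a2, a3, a4). M4_standard \<alpha>} = (m + 2) choose 2"
proof -
  let ?S = "{\<alpha> \<in> mons_of_deg (int m, a1, a2, a3, a4). M4_standard \<alpha>}"
  let ?T = "{(i::nat, j::nat, k::nat). i + j + k = m}"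
  note S_iff = M4_standard_of_deg_iff[OF a(1)]
  have "bij_betw (\<lambda>\<alpha>. (mexp \<alpha> F23, mexp \<alpha> F24, mexp \<alpha> F34)) ?S ?T"
  proof (rule bij_betwI')
    fix \<alpha> \<beta> assume "\<alpha> \<in> ?S" "\<beta> \<in> ?S"
    show "(mexp \<alpha> F23, mexp \<alpha> F24, mexp \<alpha> F34) = (mexp \<beta> F23, mexp \<beta> F24, mexp \<beta> F34) \<longleftrightarrow> \<alpha> = \<beta>"
    proof
      assume "(mexp \<alpha> F23, mexp \<alpha> F24, mexp \<alpha> F34) = (mexp \<beta> F23, mexp \<beta> F24, mexp \<beta> F34)"
      then have "int (mexp \<alpha> v) = int (mexp \<beta> v)" for v
        using \<open>\<alpha> \<in> ?S\<close> \<open>\<beta> \<in> ?S\<close> unfolding mem_Collect_eq S_iff by (cases v) simp_all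
      then show "\<alpha> = \<beta>" by (simp add: poly_mapping_eqI)
    qed simp
  next
    fix \<alpha> assume "\<alpha> \<in> ?S"
    then show "(mexp \<alpha> F23, mexp \<alpha> F24, mexp \<alpha> F34) \<in> ?T" unfolding mem_Collect_eq S_iff by simp
  next
    fix t assume "t \<in> ?T"
    then obtain i j k where t: "t = (i, j, k)" "i + j + k = m" by auto
    define h where "h v = (case v of E1 \<Rightarrow> nat a1 | E2 \<Rightarrow> nat a2 + i + j | E3 \<Rightarrow> nat a3 + i + k
        | E4 \<Rightarrow> nat a4 + j + k | F23 \<Rightarrow> i | F24 \<Rightarrow> j | F34 \<Rightarrow> k | _ \<Rightarrow> 0)" for v
    define \<alpha> where "\<alpha> = Poly_Mapping.Abs_poly_mapping h"
    have "mexp \<alpha> v = h v" for v unfolding \<alpha>_def by (subst lookup_Abs_poly_mapping) auto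
    then have "\<alpha> \<in> ?S" "t = (mexp \<alpha> F23, mexp \<alpha> F24, mexp \<alpha> F34)"
      unfolding mem_Collect_eq S_iff using t a by (simp_all add: h_def)
    then show "\<exists>\<alpha>\<in>?S. t = (mexp \<alpha> F23, mexp \<alpha> F24, mexp \<alpha> F34)" by blast
  qed
  then show ?thesis using card_sum3_eq by (simp add: bij_betw_same_card)
qed

section \<open>Sections of the exceptional classes\<close>

declare One_nat_def [simp del]

definition mon_eval :: "(nat \<Rightarrow> 'k::field) \<Rightarrow> (nat \<Rightarrow>\<^sub>0 nat) \<Rightarrow> 'k" where
  "mon_eval q \<alpha> = (\<Prod>t\<in>Poly_Mapping.keys \<alpha>. q t ^ Poly_Mapping.lookup \<alpha> t)"

definition poly_eval :: "(nat \<Rightarrow> 'k::field) \<Rightarrow> 'k kxyz \<Rightarrow> 'k" where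
  "poly_eval q f = (\<Sum>\<alpha>\<in>Poly_Mapping.keys f. Poly_Mapping.lookup f \<alpha> * mon_eval q \<alpha>)"

lemma mon_eval_superset:
  "finite K \<Longrightarrow> Poly_Mapping.keys \<alpha> \<subseteq> K \<Longrightarrow> mon_eval q \<alpha> = (\<Prod>t\<in>K. q t ^ Poly_Mapping.lookup \<alpha> t)"
  unfolding mon_eval_def by (rule prod.mono_neutral_left) (auto simp: in_keys_iff)

lemma mon_eval_add: "mon_eval q (\<alpha> + \<beta>) = mon_eval q \<alpha> * mon_eval q \<beta>"
proof -
  let ?K = "Poly_Mapping.keys \<alpha> \<union> Poly_Mapping.keys \<beta>"
  have "mon_eval q (\<alpha> + \<beta>) = (\<Prod>t\<in>?K. q t ^ Poly_Mapping.lookup (\<alpha> + \<beta>) t)"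
    by (rule mon_eval_superset) (auto dest: subsetD[OF keys_add])
  also have "\<dots> = (\<Prod>t\<in>?K. q t ^ Poly_Mapping.lookup \<alpha> t) * (\<Prod>t\<in>?K. q t ^ Poly_Mapping.lookup \<beta> t)"
    by (simp add: lookup_add power_add prod.distrib)
  also have "\<dots> = mon_eval q \<alpha> * mon_eval q \<beta>"
    by (simp add: mon_eval_superset[symmetric])
  finally show ?thesis .
qed

lemma mon_eval_single: "mon_eval q (Poly_Mapping.single t 1) = q t"
  unfolding mon_eval_def by simp

lemma poly_eval_superset:
  "finite A \<Longrightarrow> Poly_Mapping.keys f \<subseteq> A \<Longrightarrow> poly_eval q f = (\<Sum>\<alpha>\<in>A. Poly_Mapping.lookup f \<alpha> * mon_eval q \<alpha>)"
  unfolding poly_eval_def by (rule sum.mono_neutral_left) (auto simp: in_keys_iff)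

lemma poly_eval_0 [simp]: "poly_eval q 0 = 0"
  unfolding poly_eval_def by simp

lemma poly_eval_add: "poly_eval q (f + g) = poly_eval q f + poly_eval q g"
proof -
  let ?A = "Poly_Mapping.keys f \<union> Poly_Mapping.keys g"
  have "poly_eval q (f + g) = (\<Sum>\<alpha>\<in>?A. Poly_Mapping.lookup (f + g) \<alpha> * mon_eval q \<alpha>)"
    by (rule poly_eval_superset) (auto dest: subsetD[OF keys_add])
  also have "\<dots> = (\<Sum>\<alpha>\<in>?A. Poly_Mapping.lookup f \<alpha> * mon_eval q \<alpha>) + (\<Sum>\<alpha>\<in>?A. Poly_Mapping.lookup g \<alpha> * mon_eval q \<alpha>)"
    by (simp add: lookup_add distrib_right sum.distrib)
  also have "\<dots> = poly_eval q f + poly_eval q g"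
    by (simp add: poly_eval_superset[symmetric])
  finally show ?thesis .
qed

lemma poly_eval_single: "poly_eval q (Poly_Mapping.single \<alpha> c) = c * mon_eval q \<alpha>"
  by (subst poly_eval_superset[of "{\<alpha>}"]) auto

lemma poly_eval_diff: "poly_eval q (f - g) = poly_eval q f - poly_eval q g"
  using poly_eval_add[of q "f - g" g] by simp

lemma poly_eval_sum: "poly_eval q (sum F S) = (\<Sum>x\<in>S. poly_eval q (F x))"
  by (induction S rule: infinite_finite_induct) (simp_all add: poly_eval_add)

lemma poly_eval_mult: "poly_eval q (f * g) = poly_eval q f * poly_eval q g"
proof -
  have "f * g = (\<Sum>\<alpha>\<in>Poly_Mapping.keys f. \<Sum>\<beta>\<in>Poly_Mapping.keys g.
      Poly_Mapping.single (\<alpha> + \<beta>) (Poly_Mapping.lookup f \<alpha> * Poly_Mapping.lookup g \<beta>))"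
    by (subst (1 2) sum_single_lookup_keys[symmetric]) (simp add: sum_product mult_single)
  then have "poly_eval q (f * g) = (\<Sum>\<alpha>\<in>Poly_Mapping.keys f. \<Sum>\<beta>\<in>Poly_Mapping.keys g.
      (Poly_Mapping.lookup f \<alpha> * mon_eval q \<alpha>) * (Poly_Mapping.lookup g \<beta> * mon_eval q \<beta>))"
    by (simp add: poly_eval_sum poly_eval_single mon_eval_add algebra_simps)
  also have "\<dots> = poly_eval q f * poly_eval q g"
    unfolding poly_eval_def by (simp add: sum_product)
  finally show ?thesis .
qed

lemma poly_eval_point_ideal:
  assumes "f \<in> point_ideal v"
  shows "poly_eval v f = 0"
proof -
  let ?T = "{f :: 'a::field kxyz. poly_eval v f = 0}"
  have "poly_eval v (Poly_Mapping.single (Poly_Mapping.single l 1) (v j)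
      - Poly_Mapping.single (Poly_Mapping.single j 1) (v l)) = 0" for j l
    by (simp only: poly_eval_diff poly_eval_single mon_eval_single) simp
  then have "point_ideal v \<subseteq> ?T"
    unfolding point_ideal_def ideal_gen_def
    by (intro module.span_minimal[OF module_mult])
      (auto simp: module.subspace_def[OF module_mult] poly_eval_add poly_eval_mult)
  then show ?thesis using assms by auto
qed

lemma ideal_pow_one_subset: "ideal_pow (ideal_gen G) 1 \<subseteq> ideal_gen (G :: 'a::comm_ring_1 set)"
proof -
  have "{prod_list xs | xs. length xs = 1 \<and> set xs \<subseteq> ideal_gen G} \<subseteq> ideal_gen G"
    by (auto simp: length_Suc_conv One_nat_def)
  then have "ideal_pow (ideal_gen G) 1 \<subseteq> ideal_gen (ideal_gen G)"
    unfolding ideal_pow_def ideal_gen_def by (rule module.span_mono[OF module_mult])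
  also have "\<dots> = ideal_gen G"
    unfolding ideal_gen_def by (rule module.span_span[OF module_mult])
  finally show ?thesis .
qed

definition dot3 :: "(nat \<Rightarrow> 'k::field) \<Rightarrow> (nat \<Rightarrow> 'k) \<Rightarrow> 'k" where
  "dot3 u v = u 0 * v 0 + u 1 * v 1 + u 2 * v 2"

definition cross3 :: "(nat \<Rightarrow> 'k::field) \<Rightarrow> (nat \<Rightarrow> 'k) \<Rightarrow> nat \<Rightarrow> 'k" where
  "cross3 a b t = (if t = 0 then a 1 * b 2 - a 2 * b 1
     else if t = 1 then a 2 * b 0 - a 0 * b 2 else a 0 * b 1 - a 1 * b 0)"

definition nonzero3 :: "(nat \<Rightarrow> 'k::field) \<Rightarrow> bool" where
  "nonzero3 u \<longleftrightarrow> \<not> (u 0 = 0 \<and> u 1 = 0 \<and> u 2 = 0)"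

definition det3v :: "(nat \<Rightarrow> 'k::field) \<Rightarrow> (nat \<Rightarrow> 'k) \<Rightarrow> (nat \<Rightarrow> 'k) \<Rightarrow> 'k" where
  "det3v a b c = det3 (a 0) (a 1) (a 2) (b 0) (b 1) (b 2) (c 0) (c 1) (c 2)"

lemma det3v_eq_dot3_cross3: "det3v a b c = dot3 (cross3 a b) c"
  unfolding det3v_def det3_def dot3_def cross3_def by (simp add: algebra_simps)

lemma det3v_nonzero_imp_cross3: "det3v a b c \<noteq> 0 \<Longrightarrow> nonzero3 (cross3 a b)"
  unfolding nonzero3_def det3v_eq_dot3_cross3 dot3_def by auto

lemma orthogonal_imp_cross3_multiple:
  assumes "dot3 u a = 0" "dot3 u b = 0" "nonzero3 (cross3 a b)"
  shows "\<exists>l. u 0 = l * cross3 a b 0 \<and> u 1 = l * cross3 a b 1 \<and> u 2 = l * cross3 a b 2"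
proof -
  have i1: "u 1 * cross3 a b 0 = u 0 * cross3 a b 1"
    and i2: "u 2 * cross3 a b 0 = u 0 * cross3 a b 2"
    and i3: "u 2 * cross3 a b 1 = u 1 * cross3 a b 2"
    using assms(1,2) unfolding dot3_def cross3_def by simp_all algebra+
  consider "cross3 a b 0 \<noteq> 0" | "cross3 a b 1 \<noteq> 0" | "cross3 a b 2 \<noteq> 0"
    using assms(3) unfolding nonzero3_def by blast
  then show ?thesis
  proof cases
    case 1
    then show ?thesis using i1 i2 by (intro exI[of _ "u 0 / cross3 a b 0"]) (auto simp: field_simps)
  next
    case 2
    then show ?thesis using i1 i3 by (intro exI[of _ "u 1 / cross3 a b 1"]) (auto simp: field_simps)
  next
    case 3
    then show ?thesis using i2 i3 by (intro exI[of _ "u 2 / cross3 a b 2"]) (auto simp: field_simps)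
  qed
qed

lemma general_position_det3v:
  assumes "general_position p" "i \<in> {1..4}" "j \<in> {1..4}" "k \<in> {1..4}" "i \<noteq> j" "j \<noteq> k" "i \<noteq> k"
  shows "det3v (p i) (p j) (p k) \<noteq> 0"
  using assms unfolding general_position_def det3v_def by blast

lemma general_position_cross3:
  assumes gp: "general_position p" and ij: "i \<in> {1..4}" "j \<in> {1..4::nat}" "i \<noteq> j"
  shows "nonzero3 (cross3 (p i) (p j))"
proof -
  consider "i \<noteq> 1 \<and> j \<noteq> 1" | "i \<noteq> 2 \<and> j \<noteq> 2" | "i \<noteq> 3 \<and> j \<noteq> 3" using \<open>i \<noteq> j\<close> by force
  then obtain k where "k \<in> {1..4}" "k \<noteq> i" "k \<noteq> j"
    by cases (auto intro: that[of 1] that[of 2] that[of 3])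
  then show ?thesis using general_position_det3v[OF gp ij(1,2)] ij(3) det3v_nonzero_imp_cross3 by metis
qed

definition linear_form :: "(nat \<Rightarrow> 'k::field) \<Rightarrow> 'k kxyz" where
  "linear_form u = (\<Sum>s\<in>{0,1,2}. Poly_Mapping.single (Poly_Mapping.single s 1) (u s))"

lemma poly_eval_linear_form: "poly_eval q (linear_form u) = dot3 u q"
  unfolding linear_form_def dot3_def by (simp only: poly_eval_sum poly_eval_single mon_eval_single) simp

lemma linear_form_cong: "u 0 = v 0 \<Longrightarrow> u 1 = v 1 \<Longrightarrow> u 2 = v 2 \<Longrightarrow> linear_form u = linear_form v"
  unfolding linear_form_def by simp

lemma linear_form_zero: "linear_form (\<lambda>t. 0) = 0"
  unfolding linear_form_def by simp

lemma linear_form_add: "linear_form u + linear_form v = linear_form (\<lambda>s. u s + v s)"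
  unfolding linear_form_def by (simp add: single_add)

lemma const_mult_linear_form: "Poly_Mapping.single 0 k * linear_form u = linear_form (\<lambda>s. k * u s)"
  unfolding linear_form_def sum_distrib_left mult_single add_0_left ..

lemma linear_form_mult:
  "linear_form u * linear_form v = (\<Sum>s\<in>{0,1,2}. \<Sum>t\<in>{0,1,2::nat}.
      Poly_Mapping.single (Poly_Mapping.single s 1 + Poly_Mapping.single t 1) (u s * v t))"
  unfolding linear_form_def sum_product by (simp add: mult_single)

lemma const_mult_linear_form_mult:
  "Poly_Mapping.single 0 d * (linear_form u * linear_form v) =
   (\<Sum>s\<in>{0,1,2}. \<Sum>t\<in>{0,1,2::nat}.
      Poly_Mapping.single (Poly_Mapping.single s 1 + Poly_Mapping.single t 1) (d * u s * v t))"
  unfolding linear_form_mult sum_distrib_left mult_single add_0_left mult.assoc ..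

lemma mon3_eq:
  "Poly_Mapping.keys (\<alpha> :: nat \<Rightarrow>\<^sub>0 nat) \<subseteq> {0,1,2} \<Longrightarrow>
   \<alpha> = Poly_Mapping.single 0 (Poly_Mapping.lookup \<alpha> 0) + Poly_Mapping.single 1 (Poly_Mapping.lookup \<alpha> 1)
     + Poly_Mapping.single 2 (Poly_Mapping.lookup \<alpha> 2)"
  by (subst sum_single_lookup[of "{0,1,2}" \<alpha>, symmetric]) (simp_all add: add.assoc)

lemma homog_0_const: "f \<in> homog 0 \<Longrightarrow> f = Poly_Mapping.single 0 (Poly_Mapping.lookup f 0)"
proof -
  assume h: "f \<in> homog 0"
  have "\<alpha> = 0" if "\<alpha> \<in> Poly_Mapping.keys f" for \<alpha>
  proof -
    have "Poly_Mapping.keys \<alpha> \<subseteq> {0,1,2}" "Poly_Mapping.lookup \<alpha> 0 = 0"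
      "Poly_Mapping.lookup \<alpha> 1 = 0" "Poly_Mapping.lookup \<alpha> 2 = 0"
      using h that unfolding homog_def by auto
    then show ?thesis using mon3_eq[of \<alpha>] by simp
  qed
  then have "Poly_Mapping.keys f \<subseteq> {0}" by auto
  then show ?thesis using sum_single_lookup[of "{0}" f] by simp
qed

lemma homog_1_linear_form:
  "f \<in> homog 1 \<Longrightarrow> f = linear_form (\<lambda>s. Poly_Mapping.lookup f (Poly_Mapping.single s 1))"
proof -
  assume h: "f \<in> homog 1"
  let ?E = "(\<lambda>s. Poly_Mapping.single s (1::nat)) ` {0,1,2::nat}"
  have "\<alpha> \<in> ?E" if "\<alpha> \<in> Poly_Mapping.keys f" for \<alpha>
  proof -
    have k: "Poly_Mapping.keys \<alpha> \<subseteq> {0,1,2}"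
      and "Poly_Mapping.lookup \<alpha> 0 + Poly_Mapping.lookup \<alpha> 1 + Poly_Mapping.lookup \<alpha> 2 = 1"
      using h that unfolding homog_def by auto
    then consider
        "Poly_Mapping.lookup \<alpha> 0 = 1" "Poly_Mapping.lookup \<alpha> 1 = 0" "Poly_Mapping.lookup \<alpha> 2 = 0"
      | "Poly_Mapping.lookup \<alpha> 0 = 0" "Poly_Mapping.lookup \<alpha> 1 = 1" "Poly_Mapping.lookup \<alpha> 2 = 0"
      | "Poly_Mapping.lookup \<alpha> 0 = 0" "Poly_Mapping.lookup \<alpha> 1 = 0" "Poly_Mapping.lookup \<alpha> 2 = 1"
      by linarith
    then show ?thesis using mon3_eq[OF k] by cases auto
  qed
  then have "f = (\<Sum>\<alpha>\<in>?E. Poly_Mapping.single \<alpha> (Poly_Mapping.lookup f \<alpha>))"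
    by (intro sum_single_lookup[symmetric]) auto
  also have "\<dots> = linear_form (\<lambda>s. Poly_Mapping.lookup f (Poly_Mapping.single s 1))"
    unfolding linear_form_def
    by (rule sum.reindex_cong[where l="\<lambda>s. Poly_Mapping.single s 1"]) (auto simp: inj_on_def)
  finally show ?thesis .
qed

lemma point_section_const:
  assumes "f \<in> H0 p D" "coef D 0 = 0" "f \<noteq> 0"
  shows "\<exists>k. k \<noteq> 0 \<and> f = Poly_Mapping.single 0 k"
proof -
  have "f = Poly_Mapping.single 0 (Poly_Mapping.lookup f 0)"
    using assms(1,2) unfolding H0_def by (intro homog_0_const) simp
  then show ?thesis using assms(3) by (intro exI[of _ "Poly_Mapping.lookup f 0"]) auto
qed

lemma line_section:
  assumes H: "f \<in> H0 p D" and D: "coef D 0 = 1" "coef D i = -1" "coef D j = -1"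
    and ij: "i \<in> {1..4}" "j \<in> {1..4}" and "f \<noteq> 0" and nz: "nonzero3 (cross3 (p i) (p j))"
  shows "\<exists>l. l \<noteq> 0 \<and> f = linear_form (\<lambda>t. l * cross3 (p i) (p j) t)"
proof -
  let ?u = "\<lambda>s. Poly_Mapping.lookup f (Poly_Mapping.single s 1)"
  have f: "f = linear_form ?u"
    using H D(1) unfolding H0_def by (intro homog_1_linear_form) simp
  have "f \<in> ideal_pow (point_ideal (p k)) 1" if "k \<in> {i, j}" for k
  proof -
    have "f \<in> ideal_pow (point_ideal (p k)) (nat (- coef D k))"
      using H that ij unfolding H0_def by auto
    then show ?thesis using D that by (auto simp: One_nat_def)
  qed
  then have "f \<in> point_ideal (p k)" if "k \<in> {i, j}" for k
    using that ideal_pow_one_subset unfolding point_ideal_def by blast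
  then have "dot3 ?u (p i) = 0" "dot3 ?u (p j) = 0"
    using poly_eval_point_ideal poly_eval_linear_form f by (metis insertCI)+
  then obtain l where "?u 0 = l * cross3 (p i) (p j) 0" "?u 1 = l * cross3 (p i) (p j) 1"
    "?u 2 = l * cross3 (p i) (p j) 2"
    using orthogonal_imp_cross3_multiple nz by blast
  then have fl: "f = linear_form (\<lambda>t. l * cross3 (p i) (p j) t)"
    by (subst f, intro linear_form_cong) simp_all
  moreover have "l \<noteq> 0"
    using \<open>f \<noteq> 0\<close> fl linear_form_zero by auto
  ultimately show ?thesis by blast
qed

section \<open>Relations among the sections\<close>

lemma cross3_concurrent:
  "det3v b c d * cross3 a b t + det3v b a d * cross3 b c t + det3v b c a * cross3 b d t = 0"
  unfolding det3v_def det3_def cross3_def by (simp add: algebra_simps)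

lemma concurrent_line_sections_relation:
  fixes p :: "nat \<Rightarrow> nat \<Rightarrow> 'k::field" and s :: "ev \<Rightarrow> 'k kxyz"
  assumes gp: "general_position p"
    and sec: "\<forall>v\<in>all_vars. s v \<in> H0 p (vdeg v) \<and> s v \<noteq> 0"
    and idx: "distinct [a, b, c, d]" "{a, b, c, d} \<subseteq> {1..4}"
    and pts: "coef (vdeg ea) 0 = 0" "coef (vdeg ec) 0 = 0" "coef (vdeg ed) 0 = 0"
    and lines: "coef (vdeg fab) 0 = 1" "coef (vdeg fab) a = -1" "coef (vdeg fab) b = -1"
      "coef (vdeg fbc) 0 = 1" "coef (vdeg fbc) b = -1" "coef (vdeg fbc) c = -1"
      "coef (vdeg fbd) 0 = 1" "coef (vdeg fbd) b = -1" "coef (vdeg fbd) d = -1"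
  shows "\<exists>d1 d2 d3. d1 \<noteq> 0 \<and> Poly_Mapping.single 0 d1 * (s ea * s fab)
     + Poly_Mapping.single 0 d2 * (s ec * s fbc) + Poly_Mapping.single 0 d3 * (s ed * s fbd) = 0"
proof -
  have H: "s v \<in> H0 p (vdeg v)" "s v \<noteq> 0" for v using sec UNIV_ev by auto
  have ij: "a \<in> {1..4}" "b \<in> {1..4}" "c \<in> {1..4}" "d \<in> {1..4}"
    "a \<noteq> b" "b \<noteq> c" "b \<noteq> d" "c \<noteq> d" using idx by auto
  note nz = general_position_cross3[OF gp]
  obtain ka kc kd where k: "ka \<noteq> 0" "kc \<noteq> 0" "kd \<noteq> 0" "s ea = Poly_Mapping.single 0 ka"
    "s ec = Poly_Mapping.single 0 kc" "s ed = Poly_Mapping.single 0 kd"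
    using point_section_const[OF H(1) pts(1) H(2)] point_section_const[OF H(1) pts(2) H(2)]
      point_section_const[OF H(1) pts(3) H(2)] by metis
  obtain la lc ld where l: "la \<noteq> 0" "lc \<noteq> 0" "ld \<noteq> 0"
    "s fab = linear_form (\<lambda>t. la * cross3 (p a) (p b) t)"
    "s fbc = linear_form (\<lambda>t. lc * cross3 (p b) (p c) t)"
    "s fbd = linear_form (\<lambda>t. ld * cross3 (p b) (p d) t)"
    using line_section[OF H(1) lines(1-3) ij(1,2) H(2) nz[OF ij(1,2,5)]]
      line_section[OF H(1) lines(4-6) ij(2,3) H(2) nz[OF ij(2,3,6)]]
      line_section[OF H(1) lines(7-9) ij(2,4) H(2) nz[OF ij(2,4,7)]] by metis
  let ?d1 = "det3v (p b) (p c) (p d) / (ka * la)"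
  let ?d2 = "det3v (p b) (p a) (p d) / (kc * lc)"
  let ?d3 = "det3v (p b) (p c) (p a) / (kd * ld)"
  show ?thesis
  proof (intro exI conjI)
    show "?d1 \<noteq> 0"
      using general_position_det3v[OF gp ij(2,3,4,6,8,7)] k l by simp
    have "Poly_Mapping.single 0 ?d1 * (s ea * s fab) + Poly_Mapping.single 0 ?d2 * (s ec * s fbc)
        + Poly_Mapping.single 0 ?d3 * (s ed * s fbd)
      = linear_form (\<lambda>t. det3v (p b) (p c) (p d) * cross3 (p a) (p b) t
          + det3v (p b) (p a) (p d) * cross3 (p b) (p c) t + det3v (p b) (p c) (p a) * cross3 (p b) (p d) t)"
      unfolding k l using k l
      by (simp add: const_mult_linear_form linear_form_add mult.assoc[symmetric] mult_single)
    also have "\<dots> = 0"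
      unfolding cross3_concurrent by (rule linear_form_zero)
    finally show "Poly_Mapping.single 0 ?d1 * (s ea * s fab) + Poly_Mapping.single 0 ?d2 * (s ec * s fbc)
        + Poly_Mapping.single 0 ?d3 * (s ed * s fbd) = 0" .
  qed
qed

lemma antisymmetric_quadratic_form_eq_0:
  assumes "B 0 0 = 0" "B 1 1 = 0" "B 2 2 = 0" "B 1 0 = - B 0 1" "B 2 0 = - B 0 2" "B 2 1 = - B 1 2"
  shows "(\<Sum>s\<in>{0,1,2}. \<Sum>t\<in>{0,1,2::nat}.
      Poly_Mapping.single (Poly_Mapping.single s 1 + Poly_Mapping.single t (1::nat)) (B s t)) = (0::'k::field kxyz)"
proof -
  let ?e = "\<lambda>s. Poly_Mapping.single s (1::nat)"
  have "(\<Sum>s\<in>{0,1,2}. \<Sum>t\<in>{0,1,2::nat}. Poly_Mapping.single (?e s + ?e t) (B s t)) =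
     Poly_Mapping.single (?e 0 + ?e 0) (B 0 0) + Poly_Mapping.single (?e 1 + ?e 1) (B 1 1)
     + Poly_Mapping.single (?e 2 + ?e 2) (B 2 2)
     + Poly_Mapping.single (?e 0 + ?e 1) (B 0 1 + B 1 0) + Poly_Mapping.single (?e 0 + ?e 2) (B 0 2 + B 2 0)
     + Poly_Mapping.single (?e 1 + ?e 2) (B 1 2 + B 2 1)"
    by (simp add: single_add add_ac)
  then show ?thesis using assms by simp
qed

lemma sum_single_add:
  "(\<Sum>s\<in>S. \<Sum>t\<in>T. Poly_Mapping.single (e s t) (f s t)) + (\<Sum>s\<in>S. \<Sum>t\<in>T. Poly_Mapping.single (e s t) (g s t))
   = (\<Sum>s\<in>S. \<Sum>t\<in>T. Poly_Mapping.single (e s t) (f s t + g s t :: 'b::comm_monoid_add))"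
  by (simp only: single_add sum.distrib)

lemma pluecker_relation:
  fixes a b c d :: "nat \<Rightarrow> 'k::field"
  assumes l: "l12 \<noteq> 0" "l34 \<noteq> 0" "l13 \<noteq> 0" "l24 \<noteq> 0" "l14 \<noteq> 0" "l23 \<noteq> 0"
  shows "\<exists>d1 d2 d3. d1 \<noteq> 0 \<and>
      Poly_Mapping.single 0 d1 * (linear_form (\<lambda>t. l23 * cross3 b c t) * linear_form (\<lambda>t. l14 * cross3 a d t))
    + Poly_Mapping.single 0 d2 * (linear_form (\<lambda>t. l12 * cross3 a b t) * linear_form (\<lambda>t. l34 * cross3 c d t))
    + Poly_Mapping.single 0 d3 * (linear_form (\<lambda>t. l13 * cross3 a c t) * linear_form (\<lambda>t. l24 * cross3 b d t)) = 0"
proof (intro exI conjI)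
  let ?d1 = "1 / (l23 * l14)" and ?d2 = "1 / (l12 * l34)" and ?d3 = "- 1 / (l13 * l24)"
  show "?d1 \<noteq> 0" using l by simp
  define B where "B s t = ?d1 * (l23 * cross3 b c s) * (l14 * cross3 a d t)
    + (?d2 * (l12 * cross3 a b s) * (l34 * cross3 c d t) + ?d3 * (l13 * cross3 a c s) * (l24 * cross3 b d t))"
    for s t
  have B: "B s t = cross3 b c s * cross3 a d t + cross3 a b s * cross3 c d t - cross3 a c s * cross3 b d t" for s t
    unfolding B_def using l by (simp add: field_simps)
  have "B 0 0 = 0" "B 1 1 = 0" "B 2 2 = 0" "B 1 0 = - B 0 1" "B 2 0 = - B 0 2" "B 2 1 = - B 1 2"
    unfolding B cross3_def by (simp_all add: algebra_simps)
  then show "Poly_Mapping.single 0 ?d1 * (linear_form (\<lambda>t. l23 * cross3 b c t) * linear_form (\<lambda>t. l14 * cross3 a d t))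
    + Poly_Mapping.single 0 ?d2 * (linear_form (\<lambda>t. l12 * cross3 a b t) * linear_form (\<lambda>t. l34 * cross3 c d t))
    + Poly_Mapping.single 0 ?d3 * (linear_form (\<lambda>t. l13 * cross3 a c t) * linear_form (\<lambda>t. l24 * cross3 b d t)) = 0"
    unfolding const_mult_linear_form_mult add.assoc sum_single_add B_def[symmetric]
    by (rule antisymmetric_quadratic_form_eq_0)
qed

lemma pluecker_line_sections_relation:
  fixes p :: "nat \<Rightarrow> nat \<Rightarrow> 'k::field" and s :: "ev \<Rightarrow> 'k kxyz"
  assumes gp: "general_position p"
    and sec: "\<forall>v\<in>all_vars. s v \<in> H0 p (vdeg v) \<and> s v \<noteq> 0"
  shows "\<exists>d1 d2 d3. d1 \<noteq> 0 \<and> Poly_Mapping.single 0 d1 * (s F23 * s F14)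
     + Poly_Mapping.single 0 d2 * (s F12 * s F34) + Poly_Mapping.single 0 d3 * (s F13 * s F24) = 0"
proof -
  have H: "s v \<in> H0 p (vdeg v)" "s v \<noteq> 0" for v using sec UNIV_ev by auto
  have line: "\<exists>l. l \<noteq> 0 \<and> s v = linear_form (\<lambda>t. l * cross3 (p i) (p j) t)"
    if "coef (vdeg v) 0 = 1" "coef (vdeg v) i = -1" "coef (vdeg v) j = -1" "i \<in> {1..4}" "j \<in> {1..4}" "i \<noteq> j"
    for v i j
    using line_section[OF H(1) that(1-5) H(2) general_position_cross3[OF gp that(4-6)]] .
  obtain l12 l34 l13 l24 l14 l23 where
    l12: "l12 \<noteq> 0" "s F12 = linear_form (\<lambda>t. l12 * cross3 (p 1) (p 2) t)"
    and l34: "l34 \<noteq> 0" "s F34 = linear_form (\<lambda>t. l34 * cross3 (p 3) (p 4) t)"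
    and l13: "l13 \<noteq> 0" "s F13 = linear_form (\<lambda>t. l13 * cross3 (p 1) (p 3) t)"
    and l24: "l24 \<noteq> 0" "s F24 = linear_form (\<lambda>t. l24 * cross3 (p 2) (p 4) t)"
    and l14: "l14 \<noteq> 0" "s F14 = linear_form (\<lambda>t. l14 * cross3 (p 1) (p 4) t)"
    and l23: "l23 \<noteq> 0" "s F23 = linear_form (\<lambda>t. l23 * cross3 (p 2) (p 3) t)"
    using line[of F12 1 2] line[of F34 3 4] line[of F13 1 3] line[of F24 2 4] line[of F14 1 4] line[of F23 2 3]
    by auto
  show ?thesis
    unfolding l12(2) l34(2) l13(2) l24(2) l14(2) l23(2)
    by (rule pluecker_relation[OF l12(1) l34(1) l13(1) l24(1) l14(1) l23(1)])
qed

section \<open>The initial ideal of \<open>Q\<^sub>4\<close>\<close>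

abbreviation mon2 :: "ev \<Rightarrow> ev \<Rightarrow> mon" where
  "mon2 a b \<equiv> Poly_Mapping.single a 1 + Poly_Mapping.single b 1"

lemma mexp_mon2: "mexp (mon2 a b) v = (if v = a then 1 else 0) + (if v = b then 1 else 0)"
  by (simp add: lookup_add lookup_single when_def)

lemma mon2_neq: "a \<noteq> c \<Longrightarrow> a \<noteq> d \<Longrightarrow> mon2 a b \<noteq> mon2 c d"
proof
  assume "a \<noteq> c" "a \<noteq> d" "mon2 a b = mon2 c d"
  then have "mexp (mon2 a b) a = mexp (mon2 c d) a" by simp
  then show False using \<open>a \<noteq> c\<close> \<open>a \<noteq> d\<close> unfolding mexp_mon2 by simp
qed

lemma tdeg_mon2: "tdeg (mon2 a b) = 2"
  unfolding tdeg_def UNIV_ev[symmetric] mexp_mon2 by (simp add: sum.distrib)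

lemma mdeg_mon2: "mdeg (mon2 a b) = vdeg a + vdeg b"
  by (simp add: mdeg_add mdeg_single)

lemma prod_mon2:
  assumes "a \<noteq> b"
  shows "(\<Prod>v\<in>all_vars. h v ^ mexp (mon2 a b) v) = h a * (h b :: 'a::comm_monoid_mult)"
proof -
  have "(\<Prod>v\<in>UNIV. h v ^ mexp (mon2 a b) v) = (\<Prod>v\<in>{a,b}. h v ^ mexp (mon2 a b) v)"
    by (rule prod.mono_neutral_right) (auto simp: mexp_mon2)
  also have "\<dots> = h a * h b" using assms by (simp add: mexp_mon2)
  finally show ?thesis unfolding UNIV_ev .
qed

lemma vidx_inj: "vidx v = vidx w \<Longrightarrow> v = w"
  by (cases v; cases w) simp_all

lemma revlex_less_asym: "revlex_less \<alpha> \<beta> \<Longrightarrow> \<not> revlex_less \<beta> \<alpha>"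
proof
  assume a: "revlex_less \<alpha> \<beta>" and b: "revlex_less \<beta> \<alpha>"
  then have "tdeg \<alpha> = tdeg \<beta>" unfolding revlex_less_def by auto
  then obtain v v' where v: "mexp \<alpha> v > mexp \<beta> v" "\<forall>w. vidx w > vidx v \<longrightarrow> mexp \<alpha> w = mexp \<beta> w"
    and v': "mexp \<beta> v' > mexp \<alpha> v'" "\<forall>w. vidx w > vidx v' \<longrightarrow> mexp \<beta> w = mexp \<alpha> w"
    using a b unfolding revlex_less_def by auto
  consider "vidx v < vidx v'" | "vidx v' < vidx v" | "vidx v = vidx v'" by linarith
  then show False
  proof cases
    case 1 then show False using v(2) v'(1) by fastforce
  next
    case 2 then show False using v'(2) v(1) by fastforce
  next
    case 3 then show False using vidx_inj v(1) v'(1) by fastforce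
  qed
qed

lemma revlex_less_mon2:
  assumes "a \<noteq> b" "c \<noteq> d" "vidx a < vidx b" "vidx c < vidx b" "vidx d < vidx b"
  shows "revlex_less (mon2 a b) (mon2 c d)"
  unfolding revlex_less_def tdeg_mon2
proof (intro disjI2 conjI refl exI[of _ b] allI impI)
  show "mexp (mon2 c d) b < mexp (mon2 a b) b" using assms unfolding mexp_mon2 by auto
  fix w assume "vidx b < vidx w"
  then have "w \<noteq> a" "w \<noteq> b" "w \<noteq> c" "w \<noteq> d" using assms by auto
  then show "mexp (mon2 a b) w = mexp (mon2 c d) w" unfolding mexp_mon2 by simp
qed

lemma lookup_single3:
  "Poly_Mapping.lookup (Poly_Mapping.single x1 c1 + Poly_Mapping.single x2 c2 + Poly_Mapping.single x3 c3) x
    = (if x = x1 then c1 else 0) + (if x = x2 then c2 else 0) + (if x = x3 then (c3 :: 'b::monoid_add) else 0)"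
  by (simp add: lookup_add lookup_single when_def)

lemma keys_single3:
  "Poly_Mapping.keys (Poly_Mapping.single x1 c1 + Poly_Mapping.single x2 c2 + Poly_Mapping.single x3 (c3 :: 'b::monoid_add))
    \<subseteq> {x1, x2, x3}"
  by (auto simp: in_keys_iff lookup_single3 split: if_splits)

lemma lead_mon_three_terms:
  assumes r: "revlex_less \<beta>2 \<beta>1" "revlex_less \<beta>3 \<beta>1" and "c1 \<noteq> 0"
  shows "lead_mon (Poly_Mapping.single \<beta>1 c1 + Poly_Mapping.single \<beta>2 c2 + Poly_Mapping.single \<beta>3 (c3 :: 'k::field)) = \<beta>1"
proof -
  let ?f = "Poly_Mapping.single \<beta>1 c1 + Poly_Mapping.single \<beta>2 c2 + Poly_Mapping.single \<beta>3 (c3 :: 'k)"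
  have "\<beta>2 \<noteq> \<beta>1" "\<beta>3 \<noteq> \<beta>1" using r revlex_less_asym by blast+
  then have keys: "\<beta>1 \<in> Poly_Mapping.keys ?f" "Poly_Mapping.keys ?f \<subseteq> {\<beta>1, \<beta>2, \<beta>3}"
    using \<open>c1 \<noteq> 0\<close> by (simp add: in_keys_iff lookup_single3) (rule keys_single3)
  show ?thesis unfolding lead_mon_def
  proof (rule the_equality)
    show "\<beta>1 \<in> Poly_Mapping.keys ?f \<and> (\<forall>\<beta>\<in>Poly_Mapping.keys ?f. \<beta> \<noteq> \<beta>1 \<longrightarrow> revlex_less \<beta> \<beta>1)"
      using keys r by auto
    fix \<alpha> assume "\<alpha> \<in> Poly_Mapping.keys ?f \<and> (\<forall>\<beta>\<in>Poly_Mapping.keys ?f. \<beta> \<noteq> \<alpha> \<longrightarrow> revlex_less \<beta> \<alpha>)"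
    then show "\<alpha> = \<beta>1" using keys r revlex_less_asym by blast
  qed
qed

lemma cox_eval_three_mon2:
  assumes ab: "a1 \<noteq> b1" "a2 \<noteq> b2" "a3 \<noteq> b3"
    and dist: "mon2 a1 b1 \<noteq> mon2 a2 b2" "mon2 a1 b1 \<noteq> mon2 a3 b3" "mon2 a2 b2 \<noteq> mon2 a3 b3"
    and D: "vdeg a1 + vdeg b1 = D" "vdeg a2 + vdeg b2 = D" "vdeg a3 + vdeg b3 = D"
  shows "cox_eval s (Poly_Mapping.single (mon2 a1 b1) c1 + Poly_Mapping.single (mon2 a2 b2) c2
      + Poly_Mapping.single (mon2 a3 b3) (c3 :: 'k::field))
    = Poly_Mapping.single D (Poly_Mapping.single 0 c1 * (s a1 * s b1)
      + Poly_Mapping.single 0 c2 * (s a2 * s b2) + Poly_Mapping.single 0 c3 * (s a3 * s b3))"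
proof -
  let ?f = "Poly_Mapping.single (mon2 a1 b1) c1 + Poly_Mapping.single (mon2 a2 b2) c2
    + Poly_Mapping.single (mon2 a3 b3) (c3 :: 'k)"
  let ?T = "\<lambda>\<alpha>. Poly_Mapping.single 0 (Poly_Mapping.single 0 (Poly_Mapping.lookup ?f \<alpha>))
      * (\<Prod>v\<in>all_vars. sec s v ^ Poly_Mapping.lookup \<alpha> v)"
  have "cox_eval s ?f = (\<Sum>\<alpha>\<in>{mon2 a1 b1, mon2 a2 b2, mon2 a3 b3}. ?T \<alpha>)"
    unfolding cox_eval_def
    by (rule sum.mono_neutral_left)
      (use keys_single3[of "mon2 a1 b1" c1 "mon2 a2 b2" c2 "mon2 a3 b3" c3] in \<open>auto simp: in_keys_iff\<close>)
  also have "\<dots> = ?T (mon2 a1 b1) + ?T (mon2 a2 b2) + ?T (mon2 a3 b3)"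
    using dist by (simp add: add.assoc)
  also have "\<dots> = Poly_Mapping.single D (Poly_Mapping.single 0 c1 * (s a1 * s b1)
      + Poly_Mapping.single 0 c2 * (s a2 * s b2) + Poly_Mapping.single 0 c3 * (s a3 * s b3))"
    using dist ab D unfolding lookup_single3 by (simp add: prod_mon2 sec_def mult_single single_add)
  finally show ?thesis .
qed

text \<open>The relation is the image under \<open>cox_eval\<close> of an element of \<open>(C\<^sub>4)\<^sub>D \<subseteq> Q\<^sub>4\<close> whose
  revlex-leading monomial is \<open>mon2 a1 b1\<close>.\<close>

lemma relation_lead_in_init:
  fixes s :: "ev \<Rightarrow> 'k::field kxyz"
  assumes rel: "\<exists>c1 c2 c3. c1 \<noteq> 0 \<and> Poly_Mapping.single 0 c1 * (s a1 * s b1)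
      + Poly_Mapping.single 0 c2 * (s a2 * s b2) + Poly_Mapping.single 0 c3 * (s a3 * s b3) = 0"
    and ab: "a1 \<noteq> b1" "a2 \<noteq> b2" "a3 \<noteq> b3" "mon2 a2 b2 \<noteq> mon2 a3 b3"
    and D: "vdeg a1 + vdeg b1 = D" "vdeg a2 + vdeg b2 = D" "vdeg a3 + vdeg b3 = D" "conic_class D"
    and r: "revlex_less (mon2 a2 b2) (mon2 a1 b1)" "revlex_less (mon2 a3 b3) (mon2 a1 b1)"
  shows "Poly_Mapping.single (mon2 a1 b1) 1 \<in> init_ideal (Q4 s)"
proof -
  obtain c1 c2 c3 where c1: "c1 \<noteq> 0" and rel: "Poly_Mapping.single 0 c1 * (s a1 * s b1)
      + Poly_Mapping.single 0 c2 * (s a2 * s b2) + Poly_Mapping.single 0 c3 * (s a3 * s b3) = 0"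
    using rel by blast
  have dist: "mon2 a1 b1 \<noteq> mon2 a2 b2" "mon2 a1 b1 \<noteq> mon2 a3 b3" "mon2 a2 b2 \<noteq> mon2 a3 b3"
    using r revlex_less_asym ab(4) by metis+
  let ?f = "Poly_Mapping.single (mon2 a1 b1) c1 + Poly_Mapping.single (mon2 a2 b2) c2
    + Poly_Mapping.single (mon2 a3 b3) (c3 :: 'k)"
  have "?f \<in> C4 s"
    unfolding C4_def mem_Collect_eq cox_eval_three_mon2[OF ab(1-3) dist D(1-3)] rel by simp
  moreover have "?f \<in> piece D"
    unfolding piece_def using keys_single3[of "mon2 a1 b1" c1 "mon2 a2 b2" c2 "mon2 a3 b3" c3] ab D
    by (fastforce simp: mdeg_mon2)
  ultimately have "?f \<in> Q4 s" unfolding Q4_def ideal_gen_def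
    by (intro module.span_base[OF module_mult]) (use D(4) in blast)
  moreover have "Poly_Mapping.lookup ?f (mon2 a1 b1) \<noteq> 0"
    using dist c1 unfolding lookup_single3 by simp
  then have "?f \<noteq> 0" by auto
  moreover have "lead_mon ?f = mon2 a1 b1" by (rule lead_mon_three_terms[OF r c1])
  ultimately show ?thesis unfolding init_ideal_def ideal_gen_def
    by (intro module.span_base[OF module_mult]) force
qed

lemma M4_gens_in_init_Q4:
  fixes p :: "nat \<Rightarrow> nat \<Rightarrow> 'k::field" and s :: "ev \<Rightarrow> 'k kxyz"
  assumes gp: "general_position p"
    and sec: "\<forall>v\<in>all_vars. s v \<in> H0 p (vdeg v) \<and> s v \<noteq> 0"
    and "g \<in> set M4_gens"
  shows "Poly_Mapping.single g 1 \<in> init_ideal (Q4 s)"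
proof -
  note lead = relation_lead_in_init[where s=s]
  note lines = concurrent_line_sections_relation[OF gp sec]
  note side = conic_class_def canK_def inter_explicit revlex_less_mon2 mon2_neq
  have "\<exists>d1 d2 d3. d1 \<noteq> 0 \<and> Poly_Mapping.single 0 d1 * (s E1 * s F12)
      + Poly_Mapping.single 0 d2 * (s E3 * s F23) + Poly_Mapping.single 0 d3 * (s E4 * s F24) = 0"
    by (rule lines[where a=1 and b=2 and c=3 and d=4]) simp_all
  then have g5: "Poly_Mapping.single (mon2 E1 F12) 1 \<in> init_ideal (Q4 s)"
    by (rule lead[where D="(1,0,-1,0,0)"]) (simp_all add: side)
  have "\<exists>d1 d2 d3. d1 \<noteq> 0 \<and> Poly_Mapping.single 0 d1 * (s E2 * s F12)
      + Poly_Mapping.single 0 d2 * (s E3 * s F13) + Poly_Mapping.single 0 d3 * (s E4 * s F14) = 0"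
    by (rule lines[where a=2 and b=1 and c=3 and d=4]) simp_all
  then have g4: "Poly_Mapping.single (mon2 E2 F12) 1 \<in> init_ideal (Q4 s)"
    by (rule lead[where D="(1,-1,0,0,0)"]) (simp_all add: side)
  have "\<exists>d1 d2 d3. d1 \<noteq> 0 \<and> Poly_Mapping.single 0 d1 * (s E1 * s F13)
      + Poly_Mapping.single 0 d2 * (s E2 * s F23) + Poly_Mapping.single 0 d3 * (s E4 * s F34) = 0"
    by (rule lines[where a=1 and b=3 and c=2 and d=4]) simp_all
  then have g3: "Poly_Mapping.single (mon2 E1 F13) 1 \<in> init_ideal (Q4 s)"
    by (rule lead[where D="(1,0,0,-1,0)"]) (simp_all add: side)
  have "\<exists>d1 d2 d3. d1 \<noteq> 0 \<and> Poly_Mapping.single 0 d1 * (s E1 * s F14)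
      + Poly_Mapping.single 0 d2 * (s E2 * s F24) + Poly_Mapping.single 0 d3 * (s E3 * s F34) = 0"
    by (rule lines[where a=1 and b=4 and c=2 and d=3]) simp_all
  then have g2: "Poly_Mapping.single (mon2 E1 F14) 1 \<in> init_ideal (Q4 s)"
    by (rule lead[where D="(1,0,0,0,-1)"]) (simp_all add: side)
  have g1: "Poly_Mapping.single (mon2 F23 F14) 1 \<in> init_ideal (Q4 s)"
    using pluecker_line_sections_relation[OF gp sec]
    by (rule lead[where D="(2,-1,-1,-1,-1)"]) (simp_all add: side)
  show ?thesis using assms(3) g1 g2 g3 g4 g5 unfolding M4_gens_def by auto
qed

lemma M4_subset_init_Q4:
  fixes p :: "nat \<Rightarrow> nat \<Rightarrow> 'k::field" and s :: "ev \<Rightarrow> 'k kxyz"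
  assumes "general_position p" and "\<forall>v\<in>all_vars. s v \<in> H0 p (vdeg v) \<and> s v \<noteq> 0"
  shows "(M4 :: 'k kE set) \<subseteq> init_ideal (Q4 s)"
proof -
  have "(\<lambda>\<alpha>. Poly_Mapping.single \<alpha> 1) ` set M4_gens \<subseteq> init_ideal (Q4 s)"
    using M4_gens_in_init_Q4[OF assms] by blast
  then show ?thesis
    unfolding M4_def init_ideal_def ideal_gen_def
    using module.span_mono[OF module_mult] module.span_span[OF module_mult] by blast
qed

theorem mainTheorem18:
  fixes p :: "nat \<Rightarrow> nat \<Rightarrow> 'k::field"
    and s :: "ev \<Rightarrow> 'k kxyz"
  assumes "general_position p"
    and "\<forall>v\<in>all_vars. s v \<in> H0 p (vdeg v) \<and> s v \<noteq> 0"
  shows "(\<forall>\<alpha>\<in>set M4_gens. Poly_Mapping.lookup \<alpha> E4 = 0)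
       \<and> (M4 :: 'k kE set) \<subseteq> init_ideal (Q4 s)
       \<and> (\<forall>g\<in>W4. \<forall>D. hilb_quot (M4 :: 'k kE set) (g D) = hilb_quot (M4 :: 'k kE set) D)
       \<and> (\<forall>m::nat. \<exists>N::int. \<forall>a1 a2 a3 a4. N \<le> a1 \<and> N \<le> a2 \<and> N \<le> a3 \<and> N \<le> a4 \<longrightarrow>
            hilb_quot (M4 :: 'k kE set) (int m, a1, a2, a3, a4) = (m + 2) choose 2)"
proof (intro conjI ballI allI)
  show "Poly_Mapping.lookup \<alpha> E4 = 0" if "\<alpha> \<in> set M4_gens" for \<alpha>
    using that by (auto simp: M4_gens_def lookup_add lookup_single)
  show "(M4 :: 'k kE set) \<subseteq> init_ideal (Q4 s)"
    using assms by (rule M4_subset_init_Q4)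
  show "hilb_quot (M4 :: 'k kE set) (g D) = hilb_quot (M4 :: 'k kE set) D" if "g \<in> W4" for g D
    using that by (rule hilb_quot_M4_W4_invariant)
  show "\<exists>N::int. \<forall>a1 a2 a3 a4. N \<le> a1 \<and> N \<le> a2 \<and> N \<le> a3 \<and> N \<le> a4 \<longrightarrow>
      hilb_quot (M4 :: 'k kE set) (int m, a1, a2, a3, a4) = (m + 2) choose 2" for m
    by (intro exI[of _ 1] allI impI) (simp add: hilb_quot_M4 card_M4_standard_of_deg)
qed

end
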